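(* Let $n,d,e,m$ be such that the Padé matrix $P_T$ of $\mathcal{T}^n_{d,e,m}\subset\mathbb{P}^N$ is square, i.e. $\binom{m+n}{n}-\binom{d+n}{n}=\binom{e+n}{n}$. If $\mathcal{T}^n_{d,e,m}$ is a non-defective hypersurface of $\mathbb{P}^N$, then $P_T$ is non-singular for a general choice of the coefficients, i.e. $\det(P_T)\not\equiv 0$ as a polynomial in the $c_\gamma$.
   Context: Notation: $x=(x_1,\dots,x_n)$, multi-indices $\gamma\in\mathbb{N}^n$, $x^\gamma=x_1^{\gamma_1}\cdots x_n^{\gamma_n}$, $|\gamma|=\gamma_1+\dots+\gamma_n$. Taylor variety: for $P,Q\in\mathbb{C}[x]$ with $P(0)=Q(0)=1$, $\deg P\le d$, $\deg Q\le e$, write the Taylor expansion at the origin $P/Q=1+\sum_{0<|\gamma|\le m}c_\gamma x^\gamma+(\text{terms of order}\ge m+1)$. This defines a map $\psi:\mathbb{C}^{\binom{d+n}{n}-1}\times\mathbb{C}^{\binom{e+n}{n}-1}\to\mathbb{C}^{\binom{n+m}{n}-1}$, $(P,Q)\mapsto(c_\gamma)_{0<|\gamma|\le m}$. The Taylor variety $\mathcal{T}^n_{d,e,m}$ is the projective closure of the image of $\psi$ in $\mathbb{P}^N$, $N=\binom{n+m}{n}-1$, with homogeneous coordinates $[c_\gamma]_{0\le|\gamma|\le m}$. Its expected dimension is $\min\{\binom{d+n}{n}+\binom{e+n}{n}-2,\binom{m+n}{n}-1\}$; it is non-defective if its dimension equals the expected dimension. Padé matrix: for the generic polynomial $T=\sum_{0\le|\gamma|\le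 m}c_\gamma x^\gamma$, let $\varphi_T:\mathbb{C}[x]_{\le e}\to\operatorname{Span}\{x^\rho: d+1\le|\rho|\le m\}$ send $Q$ to the part of $QT$ supported on monomials of degree between $d+1$ and $m$. The Padé matrix $P_T$ is the matrix of $\varphi_T$ in monomial bases (columns indexed by monomials $x^\sigma$, $|\sigma|\le e$, rows by monomials $x^\rho$, $d+1\le|\rho|\le m$); its $(\rho,\sigma)$ entry is $c_{\rho-\sigma}$ if $\sigma\le\rho$ componentwise and $0$ otherwise. A point $T$ lies in $\mathcal{T}^n_{d,e,m}$ (on the open part) iff $\varphi_T$ has nontrivial kernel. *)

theory Defs
  imports Complex_Main "HOL-Combinatorics.Permutations" "HOL-Library.Extended_Nat"
begin

(* Multi-indices gamma in N^n are functions nat => nat vanishing from index n on. *)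
type_synonym mi = "nat \<Rightarrow> nat"

definition mdeg :: "nat \<Rightarrow> mi \<Rightarrow> nat" where
  "mdeg n \<gamma> = (\<Sum>i<n. \<gamma> i)"

definition MI :: "nat \<Rightarrow> nat \<Rightarrow> mi set" where
  "MI n k = {\<gamma>. (\<forall>i\<ge>n. \<gamma> i = 0) \<and> mdeg n \<gamma> \<le> k}"

definition MIrange :: "nat \<Rightarrow> nat \<Rightarrow> nat \<Rightarrow> mi set" where
  "MIrange n a b = {\<gamma>. (\<forall>i\<ge>n. \<gamma> i = 0) \<and> a \<le> mdeg n \<gamma> \<and> mdeg n \<gamma> \<le> b}"

(* Affine space C^I with coordinates indexed by the finite set I *)
definition amb :: "mi set \<Rightarrow> (mi \<Rightarrow> complex) set" where
  "amb I = {c. \<forall>\<gamma>. \<gamma> \<notin> I \<longrightarrow> c \<gamma> = 0}"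

inductive_set polyfun :: "mi set \<Rightarrow> ((mi \<Rightarrow> complex) \<Rightarrow> complex) set" for I where
  pconst: "(\<lambda>c. a) \<in> polyfun I"
| pvar: "\<gamma> \<in> I \<Longrightarrow> (\<lambda>c. c \<gamma>) \<in> polyfun I"
| padd: "f \<in> polyfun I \<Longrightarrow> g \<in> polyfun I \<Longrightarrow> (\<lambda>c. f c + g c) \<in> polyfun I"
| pmul: "f \<in> polyfun I \<Longrightarrow> g \<in> polyfun I \<Longrightarrow> (\<lambda>c. f c * g c) \<in> polyfun I"

definition zclosed :: "mi set \<Rightarrow> (mi \<Rightarrow> complex) set \<Rightarrow> bool" where
  "zclosed I V \<longleftrightarrow> (\<exists>S \<subseteq> polyfun I. V = {c \<in> amb I. \<forall>f\<in>S. f c = 0})"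

definition zclosure :: "mi set \<Rightarrow> (mi \<Rightarrow> complex) set \<Rightarrow> (mi \<Rightarrow> complex) set" where
  "zclosure I X = \<Inter>{V. zclosed I V \<and> X \<subseteq> V}"

definition zirred :: "mi set \<Rightarrow> (mi \<Rightarrow> complex) set \<Rightarrow> bool" where
  "zirred I Z \<longleftrightarrow> zclosed I Z \<and> Z \<noteq> {} \<and>
     (\<forall>A B. zclosed I A \<and> zclosed I B \<and> Z = A \<union> B \<longrightarrow> Z = A \<or> Z = B)"

definition zdim :: "mi set \<Rightarrow> (mi \<Rightarrow> complex) set \<Rightarrow> enat" where
  "zdim I V = Sup {enat k | k. \<exists>Z :: nat \<Rightarrow> (mi \<Rightarrow> complex) set.
      (\<forall>i\<le>k. zirred I (Z i) \<and> Z i \<subseteq> V) \<and> (\<forall>i<k. Z i \<subset> Z (Suc i))}"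

(* Image of psi: truncated Taylor coefficients of P/Q, with c_0 = 1 included.
   c is the truncation to degree <= m of the power series P/Q, i.e. the unique c
   supported in degrees <= m with Q * c = P modulo terms of degree > m. *)
definition taylor_image :: "nat \<Rightarrow> nat \<Rightarrow> nat \<Rightarrow> nat \<Rightarrow> (mi \<Rightarrow> complex) set" where
  "taylor_image n d e m = {c. \<exists>p q :: mi \<Rightarrow> complex.
      p (\<lambda>_. 0) = 1 \<and> q (\<lambda>_. 0) = 1 \<and>
      (\<forall>\<gamma>. \<gamma> \<notin> MI n d \<longrightarrow> p \<gamma> = 0) \<and>
      (\<forall>\<gamma>. \<gamma> \<notin> MI n e \<longrightarrow> q \<gamma> = 0) \<and>
      (\<forall>\<gamma>. \<gamma> \<notin> MI n m \<longrightarrow> c \<gamma> = 0) \<and>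
      (\<forall>\<gamma>\<in>MI n m. (\<Sum>\<sigma>\<in>{\<sigma>\<in>MI n e. \<forall>i. \<sigma> i \<le> \<gamma> i}.
                         q \<sigma> * c (\<lambda>i. \<gamma> i - \<sigma> i)) = p \<gamma>)}"

definition taylor_cone :: "nat \<Rightarrow> nat \<Rightarrow> nat \<Rightarrow> nat \<Rightarrow> (mi \<Rightarrow> complex) set" where
  "taylor_cone n d e m = {c. \<exists>t\<in>taylor_image n d e m. \<exists>a::complex. c = (\<lambda>\<gamma>. a * t \<gamma>)}"

(* dimension of the projective closure T^n_{d,e,m} in P^N = dim of its affine cone - 1 *)
definition taylor_dim :: "nat \<Rightarrow> nat \<Rightarrow> nat \<Rightarrow> nat \<Rightarrow> enat" where
  "taylor_dim n d e m = zdim (MI n m) (zclosure (MI n m) (taylor_cone n d e m)) - 1"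

definition bigN :: "nat \<Rightarrow> nat \<Rightarrow> nat" where
  "bigN n m = (m + n choose n) - 1"

definition expected_dim :: "nat \<Rightarrow> nat \<Rightarrow> nat \<Rightarrow> nat \<Rightarrow> nat" where
  "expected_dim n d e m = min ((d + n choose n) + (e + n choose n) - 2) (bigN n m)"

definition pade :: "(mi \<Rightarrow> complex) \<Rightarrow> mi \<Rightarrow> mi \<Rightarrow> complex" where
  "pade c \<rho> \<sigma> = (if \<forall>i. \<sigma> i \<le> \<rho> i then c (\<lambda>i. \<rho> i - \<sigma> i) else 0)"

definition det_on :: "'a set \<Rightarrow> ('a \<Rightarrow> 'a \<Rightarrow> complex) \<Rightarrow> complex" where
  "det_on S A = (\<Sum>p | p permutes S. of_int (sign p) * (\<Prod>i\<in>S. A i (p i)))"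

end

(* If det P_T vanished identically, then for every T the Pade map phi_T would have a kernel vector Q
   with Q(0) = 0: take a left kernel vector u of P_T and a row of maximal degree in its support, and
   perturb the coefficient of T sitting in that row and the column of the constant monomial.
   Subtracting a multiple of such a Q from the denominator of a representation P/Q kills one more
   coefficient of the denominator, so the affine cone over T^n_{d,e,m} is covered by finitely many
   images of polynomial maps in D + E - 2 parameters (D, E the numbers of monomials of degree at
   most d, e).  A Hilbert-function count bounds the length of chains of irreducible closed subsets
   of the closure of such an image by the number of parameters.  Hence the cone has dimension at
   most D + E - 2 = N - 1, and the variety is not a hypersurface of P^N. *)

theory Submission
  imports Defs "HOL-Library.Function_Algebras" "Jordan_Normal_Form.Determinant"
begin

section \<open>Polynomial functions of bounded degree\<close>

inductive poly_deg_le :: "'b set \<Rightarrow> nat \<Rightarrow> (('b \<Rightarrow> complex) \<Rightarrow> complex) \<Rightarrow> bool" for J where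
  const: "poly_deg_le J k (\<lambda>x. a)"
| var: "j \<in> J \<Longrightarrow> 1 \<le> k \<Longrightarrow> poly_deg_le J k (\<lambda>x. x j)"
| add: "poly_deg_le J k f \<Longrightarrow> poly_deg_le J k g \<Longrightarrow> poly_deg_le J k (\<lambda>x. f x + g x)"
| mult: "poly_deg_le J a f \<Longrightarrow> poly_deg_le J b g \<Longrightarrow> a + b \<le> k \<Longrightarrow> poly_deg_le J k (\<lambda>x. f x * g x)"

lemma poly_deg_le_mono: "poly_deg_le J a f \<Longrightarrow> a \<le> b \<Longrightarrow> poly_deg_le J b f"
proof (induction arbitrary: b rule: poly_deg_le.induct)
  case (mult a f a' g k)
  then show ?case using poly_deg_le.mult[of J a f a' g b] by simp
qed (auto intro: poly_deg_le.intros)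

lemma poly_deg_le_cmult: "poly_deg_le J k f \<Longrightarrow> poly_deg_le J k (\<lambda>x. c * f x)"
  using poly_deg_le.mult[OF poly_deg_le.const[of J 0 c]] by simp

lemma poly_deg_le_diff:
  "poly_deg_le J k f \<Longrightarrow> poly_deg_le J k g \<Longrightarrow> poly_deg_le J k (\<lambda>x. f x - g x)"
  using poly_deg_le.add[OF _ poly_deg_le_cmult[of J k g "-1"]] by simp

lemma poly_deg_le_sum:
  "finite S \<Longrightarrow> (\<And>s. s \<in> S \<Longrightarrow> poly_deg_le J k (f s)) \<Longrightarrow> poly_deg_le J k (\<lambda>x. \<Sum>s\<in>S. f s x)"
  by (induction S rule: finite_induct) (auto intro: poly_deg_le.intros)

lemma polyfun_imp_poly_deg_le: "f \<in> polyfun I \<Longrightarrow> \<exists>k. poly_deg_le I k f"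
proof (induction rule: polyfun.induct)
  case (pconst a)
  then show ?case using poly_deg_le.const by blast
next
  case (pvar \<gamma>)
  then show ?case using poly_deg_le.var[of \<gamma> I 1] by blast
next
  case (padd f g)
  then obtain a b where "poly_deg_le I a f" "poly_deg_le I b g" by blast
  then have "poly_deg_le I (a + b) f" "poly_deg_le I (a + b) g"
    by (auto elim: poly_deg_le_mono)
  then show ?case using poly_deg_le.add by blast
next
  case (pmul f g)
  then obtain a b where "poly_deg_le I a f" "poly_deg_le I b g" by blast
  then show ?case using poly_deg_le.mult[of I a f b g "a + b"] by blast
qed

lemma poly_deg_le_comp:
  assumes "poly_deg_le I D F" and "\<And>\<gamma>. \<gamma> \<in> I \<Longrightarrow> poly_deg_le J \<delta> (\<lambda>x. \<Phi> x \<gamma>)"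
  shows "poly_deg_le J (D * \<delta>) (\<lambda>x. F (\<Phi> x))"
  using assms(1)
proof (induction rule: poly_deg_le.induct)
  case (var j k)
  then show ?case using assms(2) poly_deg_le_mono[of J \<delta> _ "k * \<delta>"] by simp
next
  case (mult a f b g k)
  then show ?case
    using poly_deg_le.mult[of J "a * \<delta>" _ "b * \<delta>" _ "k * \<delta>"] by (simp add: add_mult_distrib[symmetric])
qed (auto intro: poly_deg_le.intros)

lemma polyfun_sum:
  "finite S \<Longrightarrow> (\<And>s. s \<in> S \<Longrightarrow> f s \<in> polyfun I) \<Longrightarrow> (\<lambda>x. \<Sum>s\<in>S. f s x) \<in> polyfun I"
  by (induction S rule: finite_induct) (auto intro: polyfun.intros)

lemma polyfun_cmult: "f \<in> polyfun I \<Longrightarrow> (\<lambda>x. c * f x) \<in> polyfun I"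
  using polyfun.pmul[OF polyfun.pconst] by blast

lemma polyfun_lincomb:
  "set fs \<subseteq> polyfun I \<Longrightarrow> (\<lambda>x. \<Sum>i<length fs. a i * (fs ! i) x) \<in> polyfun I"
  by (intro polyfun_sum polyfun_cmult) auto

interpretation fun_space: vector_space "\<lambda>(a::complex) (f::'a \<Rightarrow> complex) x. a * f x"
  by unfold_locales (auto simp: algebra_simps fun_eq_iff)

definition monomial_fun :: "'b set \<Rightarrow> ('b \<Rightarrow> nat) \<Rightarrow> ('b \<Rightarrow> complex) \<Rightarrow> complex" where
  "monomial_fun J \<alpha> x = (\<Prod>j\<in>J. x j ^ \<alpha> j)"

definition monomials_deg_le :: "'b set \<Rightarrow> nat \<Rightarrow> (('b \<Rightarrow> complex) \<Rightarrow> complex) set" where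
  "monomials_deg_le J K = {monomial_fun J \<alpha> | \<alpha>. (\<Sum>j\<in>J. \<alpha> j) \<le> K}"

lemma monomials_deg_le_mult:
  assumes "finite J" "f \<in> monomials_deg_le J a" "g \<in> monomials_deg_le J b"
  shows "(\<lambda>x. f x * g x) \<in> monomials_deg_le J (a + b)"
proof -
  from assms(2,3) obtain \<alpha> \<beta> where
    f: "f = monomial_fun J \<alpha>" "(\<Sum>j\<in>J. \<alpha> j) \<le> a" and
    g: "g = monomial_fun J \<beta>" "(\<Sum>j\<in>J. \<beta> j) \<le> b"
    unfolding monomials_deg_le_def by blast
  have "(\<lambda>x. f x * g x) = monomial_fun J (\<lambda>j. \<alpha> j + \<beta> j)"
    using assms(1) by (auto simp: f g monomial_fun_def power_add prod.distrib)
  moreover have "(\<Sum>j\<in>J. \<alpha> j + \<beta> j) \<le> a + b"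
    using f g by (simp add: sum.distrib)
  ultimately show ?thesis unfolding monomials_deg_le_def by blast
qed

lemma span_monomials_mult:
  assumes J: "finite J"
    and f: "f \<in> fun_space.span (monomials_deg_le J a)" and g: "g \<in> fun_space.span (monomials_deg_le J b)"
  shows "(\<lambda>x. f x * g x) \<in> fun_space.span (monomials_deg_le J (a + b))"
proof -
  let ?S = "fun_space.span (monomials_deg_le J (a + b))"
  have mult_closed: "fun_space.subspace {h. (\<lambda>x. h x * k x) \<in> ?S}" for k
  proof (rule fun_space.subspaceI)
    show "0 \<in> {h. (\<lambda>x. h x * k x) \<in> ?S}"
      using fun_space.span_zero by (simp add: zero_fun_def)
  next
    fix h h' assume "h \<in> {h. (\<lambda>x. h x * k x) \<in> ?S}" "h' \<in> {h. (\<lambda>x. h x * k x) \<in> ?S}"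
    then have "(\<lambda>x. h x * k x) + (\<lambda>x. h' x * k x) \<in> ?S" by (auto intro: fun_space.span_add)
    then show "h + h' \<in> {h. (\<lambda>x. h x * k x) \<in> ?S}" by (simp add: plus_fun_def distrib_right)
  next
    fix c h assume "h \<in> {h. (\<lambda>x. h x * k x) \<in> ?S}"
    then have "(\<lambda>x. c * (h x * k x)) \<in> ?S" using fun_space.span_scale by blast
    then show "(\<lambda>x. c * h x) \<in> {h. (\<lambda>x. h x * k x) \<in> ?S}" by (simp add: mult.assoc)
  qed
  have "(\<lambda>x. f x * m x) \<in> ?S" if "m \<in> monomials_deg_le J b" for m
    using fun_space.span_induct[OF f mult_closed] monomials_deg_le_mult[OF J _ that]
      fun_space.span_base by blast
  then show ?thesis
    using fun_space.span_induct[OF g mult_closed[of f, unfolded mult.commute[of _ f]]]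
    by (auto simp: mult.commute)
qed

lemma poly_deg_le_in_span:
  assumes "finite J"
  shows "poly_deg_le J K f \<Longrightarrow> f \<in> fun_space.span (monomials_deg_le J K)"
proof (induction rule: poly_deg_le.induct)
  case (const k a)
  have "(\<lambda>x. 1) = monomial_fun J (\<lambda>_. 0)" by (simp add: monomial_fun_def fun_eq_iff)
  moreover have "monomial_fun J (\<lambda>_. 0) \<in> monomials_deg_le J k"
    unfolding monomials_deg_le_def by auto
  ultimately have "(\<lambda>x. 1) \<in> fun_space.span (monomials_deg_le J k)"
    by (simp add: fun_space.span_base)
  from fun_space.span_scale[OF this, of a] show ?case by simp
next
  case (var j k)
  have "(\<lambda>x. x j) = monomial_fun J (\<lambda>i. if i = j then 1 else 0)"
    unfolding monomial_fun_def
  proof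
    fix x :: "'a \<Rightarrow> complex"
    have "(\<Prod>i\<in>J. x i ^ (if i = j then 1 else 0)) = (\<Prod>i\<in>J. if i = j then x i else 1)"
      by (rule prod.cong) auto
    then show "x j = (\<Prod>i\<in>J. x i ^ (if i = j then 1 else 0))" using var assms by simp
  qed
  moreover have "(\<Sum>i\<in>J. if i = j then 1 else 0) \<le> k" using var assms by simp
  ultimately show ?case
    unfolding monomials_deg_le_def by (blast intro: fun_space.span_base)
next
  case (add k f g)
  then have "f + g \<in> fun_space.span (monomials_deg_le J k)" by (intro fun_space.span_add)
  then show ?case by (simp add: plus_fun_def)
next
  case (mult a f b g k)
  have "monomials_deg_le J (a + b) \<subseteq> monomials_deg_le J k"
    using mult(3) by (auto simp: monomials_deg_le_def)
  then show ?case
    using span_monomials_mult[OF assms mult.IH] fun_space.span_mono by blast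
qed

lemma monomials_deg_le_subset: "finite J \<Longrightarrow> monomials_deg_le J K \<subseteq> monomial_fun J ` (J \<rightarrow>\<^sub>E {..K})"
proof
  assume "finite J"
  fix f assume "f \<in> monomials_deg_le J K"
  then obtain \<alpha> where f: "f = monomial_fun J \<alpha>" and deg: "(\<Sum>j\<in>J. \<alpha> j) \<le> K"
    unfolding monomials_deg_le_def by blast
  have "\<alpha> j \<le> K" if "j \<in> J" for j
    using deg member_le_sum[of j J \<alpha>] that \<open>finite J\<close> by auto
  then have "restrict \<alpha> J \<in> J \<rightarrow>\<^sub>E {..K}" by auto
  moreover have "f = monomial_fun J (restrict \<alpha> J)"
    unfolding f monomial_fun_def by (intro ext prod.cong) auto
  ultimately show "f \<in> monomial_fun J ` (J \<rightarrow>\<^sub>E {..K})" by blast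
qed

lemma finite_monomials_deg_le: "finite J \<Longrightarrow> finite (monomials_deg_le J K)"
  using monomials_deg_le_subset by (rule finite_subset) (simp_all add: finite_PiE)

lemma card_monomials_deg_le: "finite J \<Longrightarrow> card (monomials_deg_le J K) \<le> (K + 1) ^ card J"
proof -
  assume J: "finite J"
  have "card (monomials_deg_le J K) \<le> card (monomial_fun J ` (J \<rightarrow>\<^sub>E {..K}))"
    using J monomials_deg_le_subset by (intro card_mono) (simp_all add: finite_PiE)
  also have "\<dots> \<le> card (J \<rightarrow>\<^sub>E {..K})" by (rule card_image_le) (simp add: J finite_PiE)
  finally show ?thesis by (simp add: J card_PiE)
qed

section \<open>Zariski-closed sets\<close>

lemma zclosed_subset_amb: "zclosed I Z \<Longrightarrow> Z \<subseteq> amb I"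
  unfolding zclosed_def by auto

lemma zclosed_amb: "zclosed I (amb I)"
  unfolding zclosed_def by (intro exI[of _ "{}"]) auto

lemma zclosed_zero_set: "F \<in> polyfun I \<Longrightarrow> zclosed I {c \<in> amb I. F c = 0}"
  unfolding zclosed_def by (intro exI[of _ "{F}"]) auto

lemma zclosed_empty: "zclosed I {}"
  using zclosed_zero_set[OF polyfun.pconst[of 1]] by simp

lemma zclosed_Int: "zclosed I A \<Longrightarrow> zclosed I B \<Longrightarrow> zclosed I (A \<inter> B)"
proof -
  assume "zclosed I A" "zclosed I B"
  then obtain SA SB where "SA \<subseteq> polyfun I" "A = {c \<in> amb I. \<forall>f\<in>SA. f c = 0}"
    "SB \<subseteq> polyfun I" "B = {c \<in> amb I. \<forall>f\<in>SB. f c = 0}" unfolding zclosed_def by blast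
  then show ?thesis unfolding zclosed_def by (intro exI[of _ "SA \<union> SB"]) auto
qed

lemma zclosed_Un:
  assumes "zclosed I A" "zclosed I B"
  shows "zclosed I (A \<union> B)"
proof -
  from assms obtain SA SB where SA: "SA \<subseteq> polyfun I" "A = {c \<in> amb I. \<forall>f\<in>SA. f c = 0}"
    and SB: "SB \<subseteq> polyfun I" "B = {c \<in> amb I. \<forall>f\<in>SB. f c = 0}"
    unfolding zclosed_def by blast
  define S where "S = {(\<lambda>c. f c * g c) | f g. f \<in> SA \<and> g \<in> SB}"
  have "S \<subseteq> polyfun I" using SA(1) SB(1) by (auto simp: S_def intro: polyfun.pmul)
  moreover have "A \<union> B = {c \<in> amb I. \<forall>h\<in>S. h c = 0}"
  proof (intro equalityI subsetI)
    fix c assume c: "c \<in> {c \<in> amb I. \<forall>h\<in>S. h c = 0}"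
    show "c \<in> A \<union> B"
    proof (cases "\<forall>f\<in>SA. f c = 0")
      case False
      then obtain f where "f \<in> SA" "f c \<noteq> 0" by blast
      have "g c = 0" if "g \<in> SB" for g
      proof -
        have "(\<lambda>c. f c * g c) \<in> S" using \<open>f \<in> SA\<close> that by (auto simp: S_def)
        then have "f c * g c = 0" using c by fastforce
        then show ?thesis using \<open>f c \<noteq> 0\<close> by simp
      qed
      then have "\<forall>g\<in>SB. g c = 0" by blast
      then show ?thesis using c SB(2) by blast
    qed (use c SA(2) in blast)
  qed (auto simp: SA(2) SB(2) S_def)
  ultimately show ?thesis unfolding zclosed_def by blast
qed

lemma zclosed_UN: "finite F \<Longrightarrow> (\<And>s. s \<in> F \<Longrightarrow> zclosed I (V s)) \<Longrightarrow> zclosed I (\<Union>s\<in>F. V s)"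
  by (induction F rule: finite_induct) (auto intro: zclosed_empty zclosed_Un)

lemma zclosed_Inter:
  assumes closed: "\<And>V. V \<in> \<V> \<Longrightarrow> zclosed I V" and "\<V> \<noteq> {}"
  shows "zclosed I (\<Inter>\<V>)"
proof -
  have "\<exists>S. S \<subseteq> polyfun I \<and> (\<forall>c. c \<in> V \<longleftrightarrow> c \<in> amb I \<and> (\<forall>f\<in>S. f c = 0))"
    if "V \<in> \<V>" for V
  proof -
    from closed[OF that] obtain S where "S \<subseteq> polyfun I" "V = {c \<in> amb I. \<forall>f\<in>S. f c = 0}"
      unfolding zclosed_def by blast
    then show ?thesis by auto
  qed
  then obtain S where S: "\<And>V. V \<in> \<V> \<Longrightarrow> S V \<subseteq> polyfun I"
    and mem: "\<And>V c. V \<in> \<V> \<Longrightarrow> c \<in> V \<longleftrightarrow> c \<in> amb I \<and> (\<forall>f\<in>S V. f c = 0)"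
    by metis
  have "\<Inter>\<V> = {c \<in> amb I. \<forall>f\<in>(\<Union>V\<in>\<V>. S V). f c = 0}"
  proof (intro equalityI subsetI)
    fix c assume c: "c \<in> \<Inter>\<V>"
    obtain V0 where "V0 \<in> \<V>" using \<open>\<V> \<noteq> {}\<close> by blast
    then have "c \<in> amb I" using c mem by blast
    moreover have "f c = 0" if "V \<in> \<V>" "f \<in> S V" for V f
      using that c mem[of V c] by blast
    ultimately show "c \<in> {c \<in> amb I. \<forall>f\<in>(\<Union>V\<in>\<V>. S V). f c = 0}" by blast
  next
    fix c assume "c \<in> {c \<in> amb I. \<forall>f\<in>(\<Union>V\<in>\<V>. S V). f c = 0}"
    then have "c \<in> V" if "V \<in> \<V>" for V using mem[OF that, of c] that by blast
    then show "c \<in> \<Inter>\<V>" by blast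
  qed
  moreover have "(\<Union>V\<in>\<V>. S V) \<subseteq> polyfun I" using S by blast
  ultimately show ?thesis unfolding zclosed_def by blast
qed

lemma zclosed_zclosure: "X \<subseteq> amb I \<Longrightarrow> zclosed I (zclosure I X)"
  unfolding zclosure_def using zclosed_amb by (intro zclosed_Inter) auto

lemma zclosure_minimal: "zclosed I W \<Longrightarrow> X \<subseteq> W \<Longrightarrow> zclosure I X \<subseteq> W"
  unfolding zclosure_def by blast

lemma zclosure_superset: "X \<subseteq> zclosure I X"
  unfolding zclosure_def by blast

lemma zirred_split:
  assumes "zirred I Z" "zclosed I A" "zclosed I B" "Z \<subseteq> A \<union> B"
  shows "Z \<subseteq> A \<or> Z \<subseteq> B"
proof -
  have closed: "zclosed I (Z \<inter> A)" "zclosed I (Z \<inter> B)"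
    using assms(1-3) unfolding zirred_def by (auto intro: zclosed_Int)
  have "Z = (Z \<inter> A) \<union> (Z \<inter> B)" using assms(4) by blast
  then have "Z = Z \<inter> A \<or> Z = Z \<inter> B"
    using assms(1) closed unfolding zirred_def by blast
  then show ?thesis by blast
qed

lemma zirred_subset_UN:
  assumes irr: "zirred I Z" and F: "finite F" and closed: "\<And>s. s \<in> F \<Longrightarrow> zclosed I (V s)"
  shows "Z \<subseteq> (\<Union>s\<in>F. V s) \<Longrightarrow> \<exists>s\<in>F. Z \<subseteq> V s"
  using F closed
proof (induction F rule: finite_induct)
  case empty
  then show ?case using irr unfolding zirred_def by simp
next
  case (insert s F)
  then have "Z \<subseteq> V s \<or> Z \<subseteq> (\<Union>s\<in>F. V s)"
    by (intro zirred_split[OF irr]) (auto intro: zclosed_UN)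
  then show ?case using insert by blast
qed

lemma zirred_mult_eq_0:
  assumes irr: "zirred I Z" and h: "h \<in> polyfun I" and G: "G \<in> polyfun I"
    and prod0: "\<forall>c\<in>Z. h c * G c = 0" and h_nonzero: "\<exists>z\<in>Z. h z \<noteq> 0"
  shows "\<forall>c\<in>Z. G c = 0"
proof -
  have "zclosed I Z" using irr unfolding zirred_def by simp
  then have "Z \<subseteq> {c \<in> amb I. h c = 0} \<union> {c \<in> amb I. G c = 0}"
    using prod0 zclosed_subset_amb by fastforce
  then have "Z \<subseteq> {c \<in> amb I. h c = 0} \<or> Z \<subseteq> {c \<in> amb I. G c = 0}"
    by (rule zirred_split[OF irr zclosed_zero_set[OF h] zclosed_zero_set[OF G]])
  then show ?thesis using h_nonzero by auto
qed

definition lin_indep_on :: "'a set \<Rightarrow> ('a \<Rightarrow> complex) list \<Rightarrow> bool" where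
  "lin_indep_on Z fs \<longleftrightarrow>
     (\<forall>a. (\<forall>x\<in>Z. (\<Sum>i<length fs. a i * (fs ! i) x) = 0) \<longrightarrow> (\<forall>i<length fs. a i = 0))"

lemma lin_indep_on_UNIV_imp_distinct:
  assumes ind: "lin_indep_on UNIV gs"
  shows "distinct gs"
proof (rule ccontr)
  assume "\<not> distinct gs"
  then obtain i j where ij: "i < length gs" "j < length gs" "i \<noteq> j" "gs ! i = gs ! j"
    by (auto simp: distinct_conv_nth)
  define a where "a k = (if k = i then 1 else if k = j then -1 else 0 :: complex)" for k
  have "(\<Sum>k<length gs. a k * (gs ! k) x) = (\<Sum>k\<in>{i, j}. a k * (gs ! k) x)" for x
    by (rule sum.mono_neutral_right) (auto simp: a_def ij)
  then have "\<forall>x. (\<Sum>k<length gs. a k * (gs ! k) x) = 0" using ij by (simp add: a_def)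
  then show False using ind ij(1) unfolding lin_indep_on_def by (metis a_def one_neq_zero)
qed

lemma sum_fun_apply: "(\<Sum>v\<in>A. f v) x = (\<Sum>v\<in>A. f v x)"
  by (induction A rule: infinite_finite_induct) simp_all

lemma lin_indep_on_UNIV_imp_independent:
  assumes ind: "lin_indep_on UNIV gs"
  shows "fun_space.independent (set gs)"
proof
  assume "fun_space.dependent (set gs)"
  then obtain T u where T: "finite T" "T \<subseteq> set gs" "(\<Sum>v\<in>T. (\<lambda>x. u v * v x)) = 0"
    and "\<exists>v\<in>T. u v \<noteq> 0"
    unfolding fun_space.dependent_explicit by blast
  then obtain v where v: "v \<in> T" "u v \<noteq> 0" by blast
  define a where "a k = (if gs ! k \<in> T then u (gs ! k) else 0)" for k
  have bij: "bij_betw (nth gs) {..<length gs} (set gs)"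
    using lin_indep_on_UNIV_imp_distinct[OF ind] by (simp add: bij_betw_nth)
  have "(\<Sum>k<length gs. a k * (gs ! k) x) = 0" for x
  proof -
    have "(\<Sum>k<length gs. a k * (gs ! k) x) =
          (\<Sum>k<length gs. (\<lambda>w. if w \<in> T then u w * w x else 0) (gs ! k))"
      by (intro sum.cong) (simp_all add: a_def)
    also have "\<dots> = (\<Sum>w\<in>set gs. if w \<in> T then u w * w x else 0)"
      by (rule sum.reindex_bij_betw[OF bij])
    also have "\<dots> = (\<Sum>w\<in>T. u w * w x)"
      using T(1,2) by (simp add: sum.inter_restrict[symmetric] Int_absorb1)
    also have "\<dots> = 0" using fun_cong[OF T(3), of x] by (simp add: sum_fun_apply)
    finally show ?thesis .
  qed
  then have "\<forall>k<length gs. a k = 0" using ind unfolding lin_indep_on_def by blast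
  moreover obtain k where "k < length gs" "gs ! k = v"
    using v(1) T(2) in_set_conv_nth[of v gs] by blast
  ultimately show False using v by (auto simp: a_def)
qed

lemma length_le_card_if_lin_indep_on_UNIV:
  assumes "lin_indep_on UNIV gs" "set gs \<subseteq> fun_space.span M" "finite M"
  shows "length gs \<le> card M"
proof -
  have "card (set gs) \<le> card M"
    using fun_space.independent_span_bound[OF assms(3) lin_indep_on_UNIV_imp_independent assms(2)]
      assms(1) by simp
  then show ?thesis using distinct_card[OF lin_indep_on_UNIV_imp_distinct[OF assms(1)]] by simp
qed

lemma lin_indep_on_zclosure_comp:
  assumes amb: "\<And>x. \<Phi> x \<in> amb I" and Z: "Z \<subseteq> zclosure I (range \<Phi>)"
    and fs: "set fs \<subseteq> polyfun I" and ind: "lin_indep_on Z fs"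
  shows "lin_indep_on UNIV (map (\<lambda>f x. f (\<Phi> x)) fs)"
proof -
  have "\<forall>i<length fs. a i = 0" if sum0: "\<And>x. (\<Sum>i<length fs. a i * (fs ! i) (\<Phi> x)) = 0" for a
  proof -
    have "range \<Phi> \<subseteq> {c \<in> amb I. (\<Sum>i<length fs. a i * (fs ! i) c) = 0}" using amb sum0 by auto
    then have "zclosure I (range \<Phi>) \<subseteq> {c \<in> amb I. (\<Sum>i<length fs. a i * (fs ! i) c) = 0}"
      using fs by (intro zclosure_minimal zclosed_zero_set polyfun_lincomb)
    then show ?thesis using ind Z unfolding lin_indep_on_def by auto
  qed
  then show ?thesis unfolding lin_indep_on_def by simp
qed

text \<open>The pullbacks along \<open>\<Phi>\<close> stay independent and lie in the span of the monomials of degree at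
  most \<open>D * \<delta>\<close> in the parameters.\<close>

lemma length_le_if_lin_indep_on_zclosure:
  assumes J: "finite J" and amb: "\<And>x. \<Phi> x \<in> amb I"
    and deg: "\<And>\<gamma>. \<gamma> \<in> I \<Longrightarrow> poly_deg_le J \<delta> (\<lambda>x. \<Phi> x \<gamma>)"
    and Z: "Z \<subseteq> zclosure I (range \<Phi>)" and fs: "set fs \<subseteq> polyfun I"
    and fs_deg: "\<And>f. f \<in> set fs \<Longrightarrow> poly_deg_le I D f" and ind: "lin_indep_on Z fs"
  shows "length fs \<le> (D * \<delta> + 1) ^ card J"
proof -
  have "poly_deg_le J (D * \<delta>) (\<lambda>x. f (\<Phi> x))" if "f \<in> set fs" for f
    by (rule poly_deg_le_comp[OF fs_deg[OF that]]) (rule deg)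
  then have "set (map (\<lambda>f x. f (\<Phi> x)) fs) \<subseteq> fun_space.span (monomials_deg_le J (D * \<delta>))"
    using poly_deg_le_in_span[OF J] by auto
  then have "length fs \<le> card (monomials_deg_le J (D * \<delta>))"
    using length_le_card_if_lin_indep_on_UNIV[OF lin_indep_on_zclosure_comp[OF amb Z fs ind]]
      finite_monomials_deg_le[OF J] by simp
  then show ?thesis using card_monomials_deg_le[OF J] le_trans by blast
qed

section \<open>Chains of irreducible closed sets\<close>

lemma lin_indep_on_const: "Z \<noteq> {} \<Longrightarrow> lin_indep_on Z [\<lambda>c. 1]"
  unfolding lin_indep_on_def by auto

lemma sum_lessThan_add: "(\<Sum>i<a + b::nat. f i) = (\<Sum>i<a. f i) + (\<Sum>i<b. f (a + i))"
  by (induction b) (auto simp: add.assoc)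

text \<open>Appending multiples of a polynomial \<open>h\<close> that vanishes on \<open>Z'\<close> but not on the irreducible
  \<open>Z \<supseteq> Z'\<close> preserves independence: a relation restricted to \<open>Z'\<close> kills the first block, and then
  irreducibility lets us cancel \<open>h\<close>.\<close>

lemma lin_indep_on_append_mult:
  assumes irr: "zirred I Z" and sub: "Z' \<subseteq> Z" and h: "h \<in> polyfun I" and h_Z': "\<forall>c\<in>Z'. h c = 0"
    and h_Z: "\<exists>z\<in>Z. h z \<noteq> 0" and ind': "lin_indep_on Z' fs'" and ind: "lin_indep_on Z fs"
    and fs: "set fs \<subseteq> polyfun I"
  shows "lin_indep_on Z (fs' @ map (\<lambda>f c. h c * f c) fs)" (is "lin_indep_on Z ?gs")
  unfolding lin_indep_on_def
proof (rule allI, rule impI)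
  fix a :: "nat \<Rightarrow> complex"
  define L where "L = length fs'"
  define G where "G = (\<lambda>c. \<Sum>i<length fs. a (L + i) * (fs ! i) c)"
  have G: "G \<in> polyfun I" unfolding G_def by (rule polyfun_lincomb[OF fs])
  assume rel0: "\<forall>x\<in>Z. (\<Sum>i<length ?gs. a i * (?gs ! i) x) = 0"
  have rel: "(\<Sum>i<L. a i * (fs' ! i) x) + h x * G x = 0" if "x \<in> Z" for x
  proof -
    have "0 = (\<Sum>i<L + length fs. a i * (?gs ! i) x)" using rel0 that by (simp add: L_def)
    also have "\<dots> = (\<Sum>i<L. a i * (?gs ! i) x) + (\<Sum>i<length fs. a (L + i) * (?gs ! (L + i)) x)"
      by (rule sum_lessThan_add)
    also have "\<dots> = (\<Sum>i<L. a i * (fs' ! i) x) + h x * G x"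
      by (simp add: L_def G_def nth_append sum_distrib_left mult_ac)
    finally show ?thesis by simp
  qed
  have "(\<Sum>i<length fs'. a i * (fs' ! i) x) = 0" if "x \<in> Z'" for x
  proof -
    have "x \<in> Z" "h x = 0" using that sub h_Z' by auto
    then show ?thesis using rel[of x] by (simp add: L_def)
  qed
  then have first: "\<forall>i<L. a i = 0"
    unfolding L_def by (intro mp[OF spec[OF ind'[unfolded lin_indep_on_def]]]) blast
  then have first_block: "(\<Sum>i<L. a i * (fs' ! i) c) = 0" for c by (intro sum.neutral) simp
  have "\<forall>c\<in>Z. h c * G c = 0" using rel first_block by simp
  then have "\<forall>c\<in>Z. G c = 0" by (rule zirred_mult_eq_0[OF irr h G _ h_Z])
  then have second: "\<forall>i<length fs. a (L + i) = 0"
    by (intro mp[OF spec[OF ind[unfolded lin_indep_on_def]]]) (simp add: G_def)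
  show "\<forall>i<length ?gs. a i = 0"
  proof (intro allI impI)
    fix i assume "i < length ?gs"
    then show "a i = 0"
      using first second[rule_format, of "i - L"] by (cases "i < L") (auto simp: L_def)
  qed
qed

lemma zclosed_psubset_separating_poly:
  assumes "zclosed I A" "A \<subset> B" "B \<subseteq> amb I"
  shows "\<exists>h\<in>polyfun I. (\<forall>c\<in>A. h c = 0) \<and> (\<exists>z\<in>B. h z \<noteq> 0)"
proof -
  from assms(1) obtain S where S: "S \<subseteq> polyfun I" "A = {c \<in> amb I. \<forall>f\<in>S. f c = 0}"
    unfolding zclosed_def by blast
  obtain z where "z \<in> B" "z \<notin> A" using assms(2) by blast
  then obtain f where "f \<in> S" "f z \<noteq> 0" using S(2) assms(3) by blast
  then show ?thesis using S \<open>z \<in> B\<close> by blast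
qed

text \<open>Along a chain \<open>Z 0 \<subseteq> \<dots> \<subseteq> Z k\<close> of irreducible closed sets separated by polynomials of degree
  at most \<open>e\<close>, the space of polynomials of degree at most \<open>t * e\<close> restricted to \<open>Z i\<close> has dimension
  at least \<open>(t + i choose i)\<close>, a polynomial of degree \<open>i\<close> in \<open>t\<close>.\<close>

lemma lin_indep_on_chain:
  assumes irr: "\<And>i. i \<le> k \<Longrightarrow> zirred I (Z i)" and mono: "\<And>i. i < k \<Longrightarrow> Z i \<subseteq> Z (Suc i)"
    and sep: "\<And>i. i < k \<Longrightarrow> h i \<in> polyfun I \<and> poly_deg_le I e (h i) \<and>
                              (\<forall>c\<in>Z i. h i c = 0) \<and> (\<exists>z\<in>Z (Suc i). h i z \<noteq> 0)"
  shows "i \<le> k \<Longrightarrow> \<exists>fs. set fs \<subseteq> polyfun I \<and> (\<forall>f\<in>set fs. poly_deg_le I (t * e) f) \<and>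
                         lin_indep_on (Z i) fs \<and> (t + i choose i) \<le> length fs"
proof (induction i arbitrary: t)
  have const: "\<exists>fs. set fs \<subseteq> polyfun I \<and> (\<forall>f\<in>set fs. poly_deg_le I D f) \<and>
                    lin_indep_on (Z j) fs \<and> 1 \<le> length fs" if "j \<le> k" for j D
    using irr[OF that] unfolding zirred_def
    by (intro exI[of _ "[\<lambda>c. 1]"]) (auto intro: lin_indep_on_const polyfun.pconst poly_deg_le.const)
  {
    case 0
    then show ?case using const[of 0] by simp
  next
    case (Suc i)
    then have "i < k" by simp
    note IH_i = Suc.IH
    show ?case
    proof (induction t)
      case 0
      show ?case using const[of "Suc i"] \<open>i < k\<close> by simp
    next
      case (Suc t)
      obtain fs1 where fs1: "set fs1 \<subseteq> polyfun I" "\<forall>f\<in>set fs1. poly_deg_le I (Suc t * e) f"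
        "lin_indep_on (Z i) fs1" "(Suc t + i choose i) \<le> length fs1"
        using IH_i[of "Suc t"] \<open>i < k\<close> by auto
      obtain fs2 where fs2: "set fs2 \<subseteq> polyfun I" "\<forall>f\<in>set fs2. poly_deg_le I (t * e) f"
        "lin_indep_on (Z (Suc i)) fs2" "(t + Suc i choose Suc i) \<le> length fs2"
        using Suc.IH by blast
      have h: "h i \<in> polyfun I" "poly_deg_le I e (h i)" "\<forall>c\<in>Z i. h i c = 0" "\<exists>z\<in>Z (Suc i). h i z \<noteq> 0"
        using sep[OF \<open>i < k\<close>] by auto
      define fs where "fs = fs1 @ map (\<lambda>f c. h i c * f c) fs2"
      have "set fs \<subseteq> polyfun I"
        using fs1(1) fs2(1) h(1) by (auto simp: fs_def intro: polyfun.pmul)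
      moreover have "\<forall>f\<in>set fs. poly_deg_le I (Suc t * e) f"
        using fs1(2) fs2(2) poly_deg_le.mult[OF h(2)] by (auto simp: fs_def)
      moreover have "lin_indep_on (Z (Suc i)) fs"
        unfolding fs_def using \<open>i < k\<close>
        by (intro lin_indep_on_append_mult[OF irr mono[OF \<open>i < k\<close>] h(1,3,4) fs1(3) fs2(3,1)]) simp
      moreover have "(Suc t + Suc i choose Suc i) \<le> length fs"
        using fs1(4) fs2(4) by (simp add: fs_def)
      ultimately show ?case by blast
    qed
  }
qed

lemma Suc_power_le_fact_mult_choose: "(t + 1) ^ r \<le> fact r * (t + r choose r)"
proof (induction r)
  case (Suc r)
  have "fact (Suc r) * (t + Suc r choose Suc r) = fact r * (Suc r * (Suc (t + r) choose Suc r))"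
    by (simp add: algebra_simps)
  also have "Suc r * (Suc (t + r) choose Suc r) = Suc (t + r) * (t + r choose r)"
    by (rule Suc_times_binomial)
  finally have eq: "fact (Suc r) * (t + Suc r choose Suc r) = Suc (t + r) * (fact r * (t + r choose r))"
    by (simp add: algebra_simps)
  have "(t + 1) ^ Suc r = (t + 1) * (t + 1) ^ r" by simp
  also have "\<dots> \<le> Suc (t + r) * (fact r * (t + r choose r))"
    using Suc.IH by (intro mult_le_mono) auto
  finally show ?case using eq by simp
qed simp

text \<open>For the choice of \<open>t\<close> below, the polynomial of degree \<open>k\<close> in \<open>t\<close> beats the one of degree \<open>r < k\<close>.\<close>

lemma power_less_choose:
  fixes t K r k :: nat
  assumes "r < k" and t: "t = fact k * (K + 1) ^ r"
  shows "(t * K + 1) ^ r < (t + k choose k)"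
proof -
  have "fact k * (t * K + 1) ^ r \<le> fact k * ((K + 1) * (t + 1)) ^ r"
    by (intro mult_le_mono2 power_mono) (auto simp: algebra_simps)
  also have "\<dots> = (fact k * (K + 1) ^ r) * (t + 1) ^ r"
    by (simp only: power_mult_distrib mult.assoc)
  also have "\<dots> = t * (t + 1) ^ r" by (simp only: t)
  also have "\<dots> < (t + 1) ^ Suc r" by simp
  also have "\<dots> \<le> (t + 1) ^ k" using \<open>r < k\<close> by (intro power_increasing) auto
  also have "\<dots> \<le> fact k * (t + k choose k)" by (rule Suc_power_le_fact_mult_choose)
  finally show ?thesis by simp
qed
text \<open>A chain of length \<open>k\<close> in the closure of the image of a polynomial map with \<open>card J\<close>
  parameters forces \<open>(t + k choose k)\<close> independent polynomials of degree \<open>O(t)\<close>, while their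
  pullbacks live in a space of dimension \<open>O(t ^ card J)\<close>; so \<open>k \<le> card J\<close>.\<close>

theorem zirred_chain_length_le_card:
  assumes J: "finite J" and amb: "\<And>x. \<Phi> x \<in> amb I"
    and deg: "\<And>\<gamma>. \<gamma> \<in> I \<Longrightarrow> poly_deg_le J \<delta> (\<lambda>x. \<Phi> x \<gamma>)"
    and irr: "\<And>i. i \<le> k \<Longrightarrow> zirred I (Z i)" and strict: "\<And>i. i < k \<Longrightarrow> Z i \<subset> Z (Suc i)"
    and top: "Z k \<subseteq> zclosure I (range \<Phi>)"
  shows "k \<le> card J"
proof (rule ccontr)
  assume "\<not> k \<le> card J"
  have "\<exists>h\<in>polyfun I. (\<forall>c\<in>Z i. h c = 0) \<and> (\<exists>z\<in>Z (Suc i). h z \<noteq> 0)" if "i \<in> {..<k}" for i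
  proof (rule zclosed_psubset_separating_poly)
    show "zclosed I (Z i)" using irr[of i] that unfolding zirred_def by simp
    show "Z i \<subset> Z (Suc i)" using strict that by simp
    show "Z (Suc i) \<subseteq> amb I" using irr[of "Suc i"] that zclosed_subset_amb unfolding zirred_def by simp
  qed
  then have "\<forall>i\<in>{..<k}. \<exists>h. h \<in> polyfun I \<and> (\<forall>c\<in>Z i. h c = 0) \<and> (\<exists>z\<in>Z (Suc i). h z \<noteq> 0)"
    by blast
  from bchoice[OF this] obtain h
    where h: "\<forall>i\<in>{..<k}. h i \<in> polyfun I \<and> (\<forall>c\<in>Z i. h i c = 0) \<and> (\<exists>z\<in>Z (Suc i). h i z \<noteq> 0)"
    by blast
  have "\<forall>i\<in>{..<k}. \<exists>d. poly_deg_le I d (h i)" using h polyfun_imp_poly_deg_le by blast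
  from bchoice[OF this] obtain d where d: "\<forall>i\<in>{..<k}. poly_deg_le I (d i) (h i)" by blast
  define e where "e = (\<Sum>i<k. d i)"
  have "poly_deg_le I e (h i)" if "i < k" for i
    using d member_le_sum[of i "{..<k}" d] that by (auto simp: e_def elim: poly_deg_le_mono)
  with h have sep: "\<And>i. i < k \<Longrightarrow> h i \<in> polyfun I \<and> poly_deg_le I e (h i) \<and>
                              (\<forall>c\<in>Z i. h i c = 0) \<and> (\<exists>z\<in>Z (Suc i). h i z \<noteq> 0)" by blast
  define t where "t = fact k * (e * \<delta> + 1) ^ card J"
  obtain fs where fs: "set fs \<subseteq> polyfun I" "\<forall>f\<in>set fs. poly_deg_le I (t * e) f"
    "lin_indep_on (Z k) fs" "(t + k choose k) \<le> length fs"
    using lin_indep_on_chain[where Z = Z and h = h and k = k and i = k and t = t,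
        OF irr psubset_imp_subset[OF strict] sep] by blast
  have "length fs \<le> (t * e * \<delta> + 1) ^ card J"
    using length_le_if_lin_indep_on_zclosure[OF J amb deg top fs(1) _ fs(3)] fs(2) by blast
  moreover have "(t * (e * \<delta>) + 1) ^ card J < (t + k choose k)"
    by (rule power_less_choose[OF _ t_def]) (use \<open>\<not> k \<le> card J\<close> in linarith)
  ultimately show False using fs(4) unfolding mult.assoc by linarith
qed

lemma zdim_le:
  assumes "\<And>k Z. \<forall>i\<le>k. zirred I (Z i) \<and> Z i \<subseteq> V \<Longrightarrow> \<forall>i<k. Z i \<subset> Z (Suc i) \<Longrightarrow> k \<le> r"
  shows "zdim I V \<le> enat r"
  unfolding zdim_def using assms by (auto intro!: Sup_least)

theorem zdim_zclosure_le:
  assumes F: "finite F" and J: "\<And>s. s \<in> F \<Longrightarrow> finite (J s) \<and> card (J s) \<le> r"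
    and amb: "\<And>s x. s \<in> F \<Longrightarrow> \<Phi> s x \<in> amb I"
    and deg: "\<And>s \<gamma>. s \<in> F \<Longrightarrow> \<gamma> \<in> I \<Longrightarrow> poly_deg_le (J s) \<delta> (\<lambda>x. \<Phi> s x \<gamma>)"
    and X: "X \<subseteq> (\<Union>s\<in>F. range (\<Phi> s))"
  shows "zdim I (zclosure I X) \<le> enat r"
proof (rule zdim_le)
  fix k Z assume chain: "\<forall>i\<le>k. zirred I (Z i) \<and> Z i \<subseteq> zclosure I X" and strict: "\<forall>i<k. Z i \<subset> Z (Suc i)"
  have closed: "zclosed I (zclosure I (range (\<Phi> s)))" if "s \<in> F" for s
    using amb[OF that] by (intro zclosed_zclosure) blast
  have "(\<Union>s\<in>F. range (\<Phi> s)) \<subseteq> (\<Union>s\<in>F. zclosure I (range (\<Phi> s)))"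
    by (intro UN_mono order_refl zclosure_superset)
  with X have "X \<subseteq> (\<Union>s\<in>F. zclosure I (range (\<Phi> s)))" by (rule order_trans)
  then have "zclosure I X \<subseteq> (\<Union>s\<in>F. zclosure I (range (\<Phi> s)))"
    by (intro zclosure_minimal zclosed_UN[OF F closed])
  then obtain s where s: "s \<in> F" "Z k \<subseteq> zclosure I (range (\<Phi> s))"
    using zirred_subset_UN[where Z = "Z k" and V = "\<lambda>s. zclosure I (range (\<Phi> s))", OF _ F closed]
      chain by blast
  have "k \<le> card (J s)"
  proof (rule zirred_chain_length_le_card[where Z = Z])
    show "finite (J s)" using J[OF s(1)] by simp
    show "\<Phi> s x \<in> amb I" for x using amb[OF s(1)] .
    show "poly_deg_le (J s) \<delta> (\<lambda>x. \<Phi> s x \<gamma>)" if "\<gamma> \<in> I" for \<gamma> using deg[OF s(1) that] .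
    show "zirred I (Z i)" if "i \<le> k" for i using chain that by simp
    show "Z i \<subset> Z (Suc i)" if "i < k" for i using strict that by simp
  qed (rule s(2))
  then show "k \<le> r" using J[OF s(1)] by simp
qed

section \<open>Determinants of matrices indexed by a finite set\<close>

lemma det_on_cong:
  assumes "\<And>i j. i \<in> S \<Longrightarrow> j \<in> S \<Longrightarrow> A i j = A' i j"
  shows "det_on S A = det_on S A'"
  unfolding det_on_def
proof (intro sum.cong refl arg_cong[where f = "\<lambda>x. _ * x"] prod.cong)
  fix p i assume "p \<in> {p. p permutes S}" "i \<in> S"
  then show "A i (p i) = A' i (p i)" using assms permutes_in_image by fastforce
qed

lemma det_on_eq_det_mat:
  assumes f: "bij_betw f {0..<N} S"
  shows "det_on S A = det (mat N N (\<lambda>(i,j). A (f i) (f j)))"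
proof -
  let ?M = "mat N N (\<lambda>(i,j). A (f i) (f j))"
  let ?f' = "inv_into {0..<N} f"
  define conj where "conj = (\<lambda>\<pi> x. if x \<in> S then f (\<pi> (?f' x)) else x)"
  have bij: "bij_betw conj {\<pi>. \<pi> permutes {0..<N}} {\<pi>. \<pi> permutes S}"
    unfolding conj_def by (rule bij_betw_permutations[OF f])
  have inj: "inj_on f {0..<N}" using f bij_betw_imp_inj_on by blast
  have fin: "finite {0..<N}" by simp
  have "det ?M = (\<Sum>p | p permutes {0..<N}. of_int (sign p) * (\<Prod>i=0..<N. A (f i) (f (p i))))"
  proof -
    have "det ?M = (\<Sum>p | p permutes {0..<N}. of_int (sign p) * (\<Prod>i=0..<N. ?M $$ (i, p i)))"
      unfolding det_def by simp
    also have "\<dots> = (\<Sum>p | p permutes {0..<N}. of_int (sign p) * (\<Prod>i=0..<N. A (f i) (f (p i))))"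
    proof (rule sum.cong[OF refl])
      fix p assume "p \<in> {p. p permutes {0..<N}}"
      then have pp: "p permutes {0..<N}" by simp
      have "(\<Prod>i=0..<N. ?M $$ (i, p i)) = (\<Prod>i=0..<N. A (f i) (f (p i)))"
      proof (rule prod.cong[OF refl])
        fix i assume i: "i \<in> {0..<N}"
        then have "p i \<in> {0..<N}" using permutes_in_image[OF pp] by simp
        then show "?M $$ (i, p i) = A (f i) (f (p i))" using i by simp
      qed
      then show "of_int (sign p) * (\<Prod>i=0..<N. ?M $$ (i, p i)) = of_int (sign p) * (\<Prod>i=0..<N. A (f i) (f (p i)))"
        by simp
    qed
    finally show ?thesis .
  qed
  also have "\<dots> = (\<Sum>p | p permutes {0..<N}. of_int (sign (conj p)) * (\<Prod>x\<in>S. A x (conj p x)))"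
  proof (rule sum.cong)
    fix p assume p: "p \<in> {p. p permutes {0..<N}}"
    then have pp: "p permutes {0..<N}" by simp
    have loc: "permutes_bij_finite p {0..<N} S f ?f'"
    proof (unfold_locales)
      show "p permutes {0..<N}" by (rule pp)
      show "bij_betw f {0..<N} S" by (rule f)
      show "?f' (f x) = x" if "x \<in> {0..<N}" for x using inv_into_f_f[OF inj that] .
      show "finite {0..<N}" by simp
    qed
    have "sign (conj p) = sign p"
      unfolding conj_def by (rule permutes_bij_finite.sign_p'[OF loc])
    moreover have "(\<Prod>x\<in>S. A x (conj p x)) = (\<Prod>i\<in>{0..<N}. A (f i) (conj p (f i)))"
      by (rule prod.reindex_bij_betw[OF f, symmetric])
    moreover have "(\<Prod>i\<in>{0..<N}. A (f i) (conj p (f i))) = (\<Prod>i=0..<N. A (f i) (f (p i)))"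
    proof (rule prod.cong[OF refl])
      fix i assume i: "i \<in> {0..<N}"
      have fi: "f i \<in> S" by (rule bij_betw_apply[OF f i])
      have "conj p (f i) = f (p (?f' (f i)))" using fi by (simp add: conj_def)
      also have "?f' (f i) = i" by (rule inv_into_f_f[OF inj i])
      finally show "A (f i) (conj p (f i)) = A (f i) (f (p i))" by simp
    qed
    ultimately show "of_int (sign p) * (\<Prod>i=0..<N. A (f i) (f (p i))) = of_int (sign (conj p)) * (\<Prod>x\<in>S. A x (conj p x))"
      by simp
  qed simp
  also have "\<dots> = (\<Sum>q | q permutes S. of_int (sign q) * (\<Prod>x\<in>S. A x (q x)))"
    using sum.reindex_bij_betw[OF bij, of "\<lambda>q. of_int (sign q) * (\<Prod>x\<in>S. A x (q x))"] by simp
  finally show ?thesis unfolding det_on_def by simp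
qed

lemma det_on_transpose:
  assumes "finite S"
  shows "det_on S (\<lambda>i j. A j i) = det_on S A"
proof -
  define N where "N = card S"
  obtain f where f: "bij_betw f {0..<N} S" using ex_bij_betw_nat_finite[OF assms] by (auto simp: N_def)
  note det = det_on_eq_det_mat[OF f]
  moreover have "mat N N (\<lambda>(i, j). A (f j) (f i)) = transpose_mat (mat N N (\<lambda>(i, j). A (f i) (f j)))"
    by (rule eq_matI) auto
  ultimately show ?thesis using det_transpose[of "mat N N (\<lambda>(i, j). A (f i) (f j))" N] by simp
qed

lemma det_on_identical_rows:
  assumes "finite S" "r \<in> S" "s \<in> S" "r \<noteq> s" "\<And>j. j \<in> S \<Longrightarrow> A r j = A s j"
  shows "det_on S A = 0"
proof -
  define N where "N = card S"
  obtain f where f: "bij_betw f {0..<N} S" using ex_bij_betw_nat_finite[OF assms(1)] by (auto simp: N_def)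
  note det = det_on_eq_det_mat[OF f]
  obtain k where k: "k < N" "r = f k" using f assms(2) unfolding bij_betw_def by auto
  obtain l where l: "l < N" "s = f l" using f assms(3) unfolding bij_betw_def by auto
  have rows: "A (f k) (f i) = A (f l) (f i)" if "i < N" for i
    using assms(5)[of "f i"] bij_betw_apply[OF f, of i] that k l by simp
  have "det (mat N N (\<lambda>(i, j). A (f i) (f j))) = 0"
  proof (rule det_identical_rows[where n = N])
    show "k \<noteq> l" using k l assms(4) by auto
    show "row (mat N N (\<lambda>(i, j). A (f i) (f j))) k = row (mat N N (\<lambda>(i, j). A (f i) (f j))) l"
      by (rule eq_vecI) (simp_all add: k(1) l(1) rows)
  qed (simp_all add: k(1) l(1))
  then show ?thesis using det[of A] by simp
qed

lemma det_on_eq_0_imp_kernel: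
  assumes "finite S" "det_on S A = 0"
  obtains w where "\<forall>j. j \<notin> S \<longrightarrow> w j = 0" "\<exists>j\<in>S. w j \<noteq> 0" "\<forall>i\<in>S. (\<Sum>j\<in>S. A i j * w j) = 0"
proof -
  define N where "N = card S"
  obtain f where f: "bij_betw f {0..<N} S" using ex_bij_betw_nat_finite[OF assms(1)] by (auto simp: N_def)
  note det = det_on_eq_det_mat[OF f]
  let ?M = "mat N N (\<lambda>(i, j). A (f i) (f j))"
  let ?f' = "inv_into {0..<N} f"
  have inj: "inj_on f {0..<N}" using f bij_betw_imp_inj_on by blast
  obtain v where v: "v \<in> carrier_vec N" "v \<noteq> 0\<^sub>v N" "?M *\<^sub>v v = 0\<^sub>v N"
    using det_0_iff_vec_prod_zero[of ?M N] det[of A] assms(2) by auto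
  define w where "w j = (if j \<in> S then v $ ?f' j else 0)" for j
  have w_f: "w (f k) = v $ k" if "k < N" for k
    using that bij_betw_apply[OF f] inv_into_f_f[OF inj] by (simp add: w_def)
  have "(\<Sum>j\<in>S. A (f k) j * w j) = (?M *\<^sub>v v) $ k" if "k < N" for k
  proof -
    have "(\<Sum>j\<in>S. A (f k) j * w j) = (\<Sum>l = 0..<N. A (f k) (f l) * w (f l))"
      by (rule sum.reindex_bij_betw[OF f, symmetric])
    also have "\<dots> = (?M *\<^sub>v v) $ k"
      using that v(1) w_f by (simp add: mult_mat_vec_def scalar_prod_def)
    finally show ?thesis .
  qed
  then have "\<forall>i\<in>S. (\<Sum>j\<in>S. A i j * w j) = 0"
    using v(3) f unfolding bij_betw_def by auto
  moreover obtain k where "k < N" "v $ k \<noteq> 0" using v(1,2) by (auto simp: vec_eq_iff)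
  then have "f k \<in> S" "w (f k) \<noteq> 0" using w_f bij_betw_apply[OF f] by auto
  then have "\<exists>j\<in>S. w j \<noteq> 0" by blast
  ultimately show ?thesis using that[of w] by (auto simp: w_def)
qed

lemma det_on_linear_row:
  assumes "finite S" "r \<in> S" "finite K"
  shows "det_on S (A(r := (\<lambda>j. \<Sum>k\<in>K. c k * v k j))) = (\<Sum>k\<in>K. c k * det_on S (A(r := v k)))"
proof -
  have split: "det_on S (A(r := x)) =
      (\<Sum>p | p permutes S. of_int (sign p) * x (p r) * (\<Prod>i\<in>S - {r}. A i (p i)))" for x
    unfolding det_on_def
  proof (intro sum.cong refl)
    fix p
    have "(\<Prod>i\<in>S. (A(r := x)) i (p i)) = x (p r) * (\<Prod>i\<in>S - {r}. (A(r := x)) i (p i))"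
      by (subst prod.remove[OF assms(1,2)]) simp
    also have "(\<Prod>i\<in>S - {r}. (A(r := x)) i (p i)) = (\<Prod>i\<in>S - {r}. A i (p i))"
      by (rule prod.cong) auto
    finally show "of_int (sign p) * (\<Prod>i\<in>S. (A(r := x)) i (p i)) =
                  of_int (sign p) * x (p r) * (\<Prod>i\<in>S - {r}. A i (p i))" by simp
  qed
  let ?P = "{p. p permutes S}"
  have "(\<Sum>p\<in>?P. of_int (sign p) * (\<Sum>k\<in>K. c k * v k (p r)) * (\<Prod>i\<in>S - {r}. A i (p i))) =
        (\<Sum>p\<in>?P. \<Sum>k\<in>K. c k * (of_int (sign p) * v k (p r) * (\<Prod>i\<in>S - {r}. A i (p i))))"
    by (simp add: sum_distrib_left sum_distrib_right mult_ac)
  also have "\<dots> = (\<Sum>k\<in>K. \<Sum>p\<in>?P. c k * (of_int (sign p) * v k (p r) * (\<Prod>i\<in>S - {r}. A i (p i))))"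
    by (rule sum.swap)
  finally show ?thesis
    unfolding split by (simp add: sum_distrib_left)
qed

lemma det_on_replace_row_lincomb:
  assumes S: "finite S" and r: "r \<in> S"
  shows "det_on S (A(r := (\<lambda>j. \<Sum>k\<in>S. u k * A k j))) = u r * det_on S A"
proof -
  have "det_on S (A(r := (\<lambda>j. \<Sum>k\<in>S. u k * A k j))) = (\<Sum>k\<in>S. u k * det_on S (A(r := A k)))"
    by (rule det_on_linear_row[OF S r S])
  also have "\<dots> = u r * det_on S (A(r := A r))"
  proof -
    have "det_on S (A(r := A k)) = 0" if "k \<in> S - {r}" for k
      using that by (intro det_on_identical_rows[OF S r, of k]) auto
    then show ?thesis using S r by (simp add: sum.remove)
  qed
  finally show ?thesis by simp
qed

lemma det_on_scale_row:
  assumes "finite S" "r \<in> S"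
  shows "det_on S (A(r := (\<lambda>j. a * v j))) = a * det_on S (A(r := v))"
  using det_on_linear_row[OF assms, of "{r}" A "\<lambda>_. a" "\<lambda>_. v"] by simp

lemma det_on_eq_0_if_perturbations_eq_0:
  assumes "\<And>t. t \<noteq> 0 \<Longrightarrow> det_on S (\<lambda>i j. a i j + t * b i j) = 0"
  shows "det_on S a = 0"
proof -
  define F where "F t = det_on S (\<lambda>i j. a i j + t * b i j)" for t
  have "isCont F 0"
    unfolding F_def det_on_def by (intro continuous_intros)
  then have "(F \<longlongrightarrow> det_on S a) (at 0)" by (simp add: isCont_def F_def)
  moreover have "(F \<longlongrightarrow> 0) (at 0)"
    using assms by (intro tendsto_eventually) (auto simp: eventually_at_filter F_def)
  ultimately show ?thesis using tendsto_unique[OF at_neq_bot] by blast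
qed

lemma left_kernel_row_eq_0:
  fixes A :: "'a \<Rightarrow> 'a \<Rightarrow> complex"
  assumes S: "finite S" and r: "r \<in> S" "u r \<noteq> 0"
    and left: "\<forall>j\<in>S. (\<Sum>i\<in>S. u i * A i j) = 0"
    and rows: "\<forall>i\<in>S - {r}. (\<Sum>j\<in>S. A i j * w j) = 0"
  shows "(\<Sum>j\<in>S. A r j * w j) = 0"
proof -
  have "0 = (\<Sum>j\<in>S. (\<Sum>i\<in>S. u i * A i j) * w j)" using left by simp
  also have "\<dots> = (\<Sum>j\<in>S. \<Sum>i\<in>S. u i * (A i j * w j))"
    by (simp add: sum_distrib_right mult.assoc)
  also have "\<dots> = (\<Sum>i\<in>S. \<Sum>j\<in>S. u i * (A i j * w j))"
    by (rule sum.swap)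
  also have "\<dots> = (\<Sum>i\<in>S. u i * (\<Sum>j\<in>S. A i j * w j))"
    by (simp add: sum_distrib_left)
  also have "\<dots> = u r * (\<Sum>j\<in>S. A r j * w j)"
    using S r rows by (subst sum.remove) (auto intro!: sum.neutral)
  finally show ?thesis using r(2) by simp
qed

lemma zero_in_MI: "(\<lambda>_. 0) \<in> MI n k"
  by (simp add: MI_def mdeg_def)

lemma MI_mono: "k \<le> k' \<Longrightarrow> MI n k \<subseteq> MI n k'"
  by (auto simp: MI_def)

lemma mdeg_add: "mdeg n (\<lambda>i. \<gamma> i + \<sigma> i) = mdeg n \<gamma> + mdeg n \<sigma>"
  by (simp add: mdeg_def sum.distrib)

lemma mdeg_pos:
  assumes "\<tau> \<in> MI n k" "\<tau> \<noteq> (\<lambda>_. 0)"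
  shows "0 < mdeg n \<tau>"
proof -
  obtain i where "\<tau> i \<noteq> 0" using assms(2) by auto
  moreover have "\<forall>i\<ge>n. \<tau> i = 0" using assms(1) by (simp add: MI_def)
  then have "i < n" using \<open>\<tau> i \<noteq> 0\<close> by (cases "i < n") auto
  ultimately show ?thesis unfolding mdeg_def by (intro sum_pos2[of _ i]) auto
qed

lemma finite_MI: "finite (MI n k)"
proof -
  have "MI n k \<subseteq> (\<lambda>f i. if i < n then f i else 0) ` ({..<n} \<rightarrow>\<^sub>E {..k})"
  proof
    fix \<gamma> assume \<gamma>: "\<gamma> \<in> MI n k"
    then have "\<gamma> i \<le> k" if "i < n" for i
      using member_le_sum[of i "{..<n}" \<gamma>] that by (auto simp: MI_def mdeg_def)
    then have "restrict \<gamma> {..<n} \<in> {..<n} \<rightarrow>\<^sub>E {..k}" by auto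
    moreover have "\<gamma> = (\<lambda>i. if i < n then restrict \<gamma> {..<n} i else 0)"
      using \<gamma> by (auto simp: MI_def fun_eq_iff)
    ultimately show "\<gamma> \<in> (\<lambda>f i. if i < n then f i else 0) ` ({..<n} \<rightarrow>\<^sub>E {..k})" by blast
  qed
  then show ?thesis by (rule finite_subset) (simp add: finite_PiE)
qed

text \<open>Appending the slack \<open>k - |\<gamma>|\<close> as an \<open>(n+1)\<close>-st entry identifies \<open>MI n k\<close> with the lists
  of length \<open>n + 1\<close> summing to \<open>k\<close>.\<close>

lemma card_MI: "card (MI n k) = (k + n choose n)"
proof -
  define L where "L = {l :: nat list. length l = Suc n \<and> sum_list l = k}"
  define to_mi where "to_mi l i = (if i < n then l ! i else 0)" for l :: "nat list" and i
  have sum_L: "sum_list l = mdeg n (to_mi l) + l ! n" if "length l = Suc n" for l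
    using that by (simp add: sum_list_sum_nth mdeg_def to_mi_def atLeast0LessThan)
  have "bij_betw to_mi L (MI n k)"
  proof (rule bij_betw_byWitness[where f' = "\<lambda>\<gamma>. map \<gamma> [0..<n] @ [k - mdeg n \<gamma>]"])
    show "\<forall>l\<in>L. map (to_mi l) [0..<n] @ [k - mdeg n (to_mi l)] = l"
      using sum_L by (auto simp: L_def to_mi_def list_eq_iff_nth_eq nth_append less_Suc_eq)
    show "\<forall>\<gamma>\<in>MI n k. to_mi (map \<gamma> [0..<n] @ [k - mdeg n \<gamma>]) = \<gamma>"
      by (auto simp: MI_def to_mi_def nth_append fun_eq_iff)
    show "to_mi ` L \<subseteq> MI n k"
      using sum_L by (fastforce simp: L_def MI_def to_mi_def)
    have "mdeg n (\<lambda>i. if i < n then (map \<gamma> [0..<n] @ [x]) ! i else 0) = mdeg n \<gamma>" for \<gamma> x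
      by (simp add: mdeg_def nth_append)
    moreover have "sum_list (map \<gamma> [0..<n]) = mdeg n \<gamma>" for \<gamma>
      by (simp add: mdeg_def interv_sum_list_conv_sum_set_nat atLeast0LessThan)
    ultimately show "(\<lambda>\<gamma>. map \<gamma> [0..<n] @ [k - mdeg n \<gamma>]) ` MI n k \<subseteq> L"
      by (auto simp: L_def MI_def)
  qed
  then have "card (MI n k) = card L" by (simp add: bij_betw_same_card)
  also have "\<dots> = (k + n choose k)" unfolding L_def by (simp add: card_length_sum_list)
  finally show ?thesis by (simp add: binomial_symmetric[of n "k + n", simplified] add.commute)
qed

section \<open>Singular Pade matrices\<close>

text \<open>If \<open>det (A + t B)\<close> vanishes identically, \<open>u\<close> is a left kernel vector of \<open>A\<close> with \<open>u r \<noteq> 0\<close>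
  and \<open>u\<^sup>T B = u r \<cdot> v\<close>, then replacing row \<open>r\<close> of \<open>A\<close> by \<open>v\<close> gives a singular matrix: combining the
  rows of \<open>A + t B\<close> with weights \<open>u\<close> shows \<open>det (A + t B) = t \<cdot> det ((A + t B)(r := v))\<close>, and
  \<open>t \<rightarrow> 0\<close> concludes.\<close>

lemma det_on_replace_row_eq_0:
  assumes S: "finite S" and r: "r \<in> S" "u r \<noteq> 0"
    and left: "\<forall>j\<in>S. (\<Sum>i\<in>S. u i * A i j) = 0"
    and comb: "\<forall>j\<in>S. (\<Sum>i\<in>S. u i * B i j) = u r * v j"
    and sing: "\<And>t. det_on S (\<lambda>i j. A i j + t * B i j) = 0"
  shows "det_on S (A(r := v)) = 0"
proof (rule det_on_eq_0_if_perturbations_eq_0)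
  fix t :: complex assume "t \<noteq> 0"
  let ?At = "\<lambda>i j. A i j + t * B i j"
  have "(\<Sum>k\<in>S. u k * ?At k j) = (\<Sum>k\<in>S. u k * A k j) + t * (\<Sum>k\<in>S. u k * B k j)" for j
    by (simp add: distrib_left sum.distrib sum_distrib_left mult_ac)
  then have "(\<Sum>k\<in>S. u k * ?At k j) = (t * u r) * v j" if "j \<in> S" for j
    using left comb that by simp
  then have "u r * det_on S ?At = det_on S (?At(r := (\<lambda>j. (t * u r) * v j)))"
    by (subst det_on_replace_row_lincomb[OF S r(1), symmetric]) (rule det_on_cong, auto)
  also have "\<dots> = t * u r * det_on S (?At(r := v))"
    by (rule det_on_scale_row[OF S r(1)])
  finally have "det_on S (?At(r := v)) = 0"
    using sing[of t] \<open>t \<noteq> 0\<close> r(2) by simp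
  moreover have "?At(r := v) = (\<lambda>i j. (A(r := v)) i j + t * (B(r := (\<lambda>_. 0))) i j)"
    by (auto simp: fun_eq_iff)
  ultimately show "det_on S (\<lambda>i j. (A(r := v)) i j + t * (B(r := (\<lambda>_. 0))) i j) = 0" by simp
qed

definition pade_kernel :: "nat \<Rightarrow> nat \<Rightarrow> (mi \<Rightarrow> mi) \<Rightarrow> (mi \<Rightarrow> complex) \<Rightarrow> (mi \<Rightarrow> complex) set" where
  "pade_kernel n e g T =
     {w. (\<forall>\<tau>. \<tau> \<notin> MI n e \<longrightarrow> w \<tau> = 0) \<and> (\<forall>\<sigma>\<in>MI n e. (\<Sum>\<tau>\<in>MI n e. pade T (g \<sigma>) \<tau> * w \<tau>) = 0)}"

lemma pade_linear: "pade (\<lambda>\<gamma>. c \<gamma> + t * d \<gamma>) \<rho> \<sigma> = pade c \<rho> \<sigma> + t * pade d \<rho> \<sigma>"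
  by (simp add: pade_def)

text \<open>Perturbing the coefficient \<open>c\<^sub>g\<^sub>\<iota>\<close> changes the entries \<open>(\<sigma>, \<tau>)\<close> with \<open>g \<sigma> = g \<iota> + \<tau>\<close>. If
  \<open>g \<iota>\<close> has maximal degree among the rows in the support of \<open>u\<close>, the only such entry that \<open>u\<close> sees
  is \<open>(\<iota>, 0)\<close>.\<close>

lemma pade_unit_row_combination:
  assumes inj: "inj_on g (MI n e)" and \<iota>: "\<iota> \<in> MI n e"
    and max: "\<And>\<sigma>. \<sigma> \<in> MI n e \<Longrightarrow> u \<sigma> \<noteq> 0 \<Longrightarrow> mdeg n (g \<sigma>) \<le> mdeg n (g \<iota>)"
    and \<tau>: "\<tau> \<in> MI n e"
  shows "(\<Sum>\<sigma>\<in>MI n e. u \<sigma> * pade (\<lambda>\<gamma>. if \<gamma> = g \<iota> then 1 else 0) (g \<sigma>) \<tau>) =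
         u \<iota> * (if \<tau> = (\<lambda>_. 0) then 1 else 0)"
proof -
  have "u \<sigma> * pade (\<lambda>\<gamma>. if \<gamma> = g \<iota> then 1 else 0) (g \<sigma>) \<tau> =
        (if \<sigma> = \<iota> \<and> \<tau> = (\<lambda>_. 0) then u \<iota> else 0)" if \<sigma>: "\<sigma> \<in> MI n e" for \<sigma>
  proof (cases "(\<forall>i. \<tau> i \<le> g \<sigma> i) \<and> (\<lambda>i. g \<sigma> i - \<tau> i) = g \<iota>")
    case True
    then have g\<sigma>: "g \<sigma> = (\<lambda>i. g \<iota> i + \<tau> i)"
      by (auto simp: fun_eq_iff) (metis le_add_diff_inverse2)
    show ?thesis
    proof (cases "\<tau> = (\<lambda>_. 0)")
      case True
      then have "\<sigma> = \<iota>" using g\<sigma> inj \<sigma> \<iota> by (auto dest: inj_onD)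
      then show ?thesis using \<open>\<tau> = (\<lambda>_. 0)\<close> by (simp add: pade_def)
    next
      case False
      then have "mdeg n (g \<iota>) < mdeg n (g \<sigma>)"
        using mdeg_pos[OF \<tau>] by (simp add: g\<sigma> mdeg_add)
      then have "u \<sigma> = 0" using max[OF \<sigma>] by (meson not_le)
      then show ?thesis using False by simp
    qed
  next
    case False
    moreover have "\<tau> = (\<lambda>_. 0)" if "\<sigma> = \<iota>" "\<tau> = (\<lambda>_. 0)" using that by simp
    ultimately show ?thesis by (auto simp: pade_def)
  qed
  then have "(\<Sum>\<sigma>\<in>MI n e. u \<sigma> * pade (\<lambda>\<gamma>. if \<gamma> = g \<iota> then 1 else 0) (g \<sigma>) \<tau>) =
             (\<Sum>\<sigma>\<in>MI n e. if \<sigma> = \<iota> \<and> \<tau> = (\<lambda>_. 0) then u \<iota> else 0)"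
    by (rule sum.cong[OF refl])
  also have "\<dots> = u \<iota> * (if \<tau> = (\<lambda>_. 0) then 1 else 0)"
    using \<iota> finite_MI by simp
  finally show ?thesis .
qed

lemma pade_kernel_vanishing_at_0:
  assumes inj: "inj_on g (MI n e)" and sing: "\<And>c. det_on (MI n e) (\<lambda>\<sigma> \<tau>. pade c (g \<sigma>) \<tau>) = 0"
  shows "\<exists>w\<in>pade_kernel n e g T. w (\<lambda>_. 0) = 0 \<and> (\<exists>\<sigma>\<in>MI n e. w \<sigma> \<noteq> 0)"
proof -
  let ?C = "MI n e" and ?A = "\<lambda>\<sigma> \<tau>. pade T (g \<sigma>) \<tau>"
  have fin: "finite ?C" by (rule finite_MI)
  have "det_on ?C (\<lambda>\<tau> \<sigma>. ?A \<sigma> \<tau>) = 0" using sing[of T] det_on_transpose[OF fin, of ?A] by simp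
  then obtain u where "\<forall>\<sigma>. \<sigma> \<notin> ?C \<longrightarrow> u \<sigma> = 0"
    and u: "\<exists>\<sigma>\<in>?C. u \<sigma> \<noteq> 0" "\<forall>\<tau>\<in>?C. (\<Sum>\<sigma>\<in>?C. ?A \<sigma> \<tau> * u \<sigma>) = 0"
    by (rule det_on_eq_0_imp_kernel[OF fin])
  then have left: "\<forall>\<tau>\<in>?C. (\<Sum>\<sigma>\<in>?C. u \<sigma> * ?A \<sigma> \<tau>) = 0" by (simp add: mult.commute)
  define U where "U = {\<sigma>\<in>?C. u \<sigma> \<noteq> 0}"
  have U: "finite U" "U \<noteq> {}" using fin u(1) by (auto simp: U_def)
  have "Max ((\<lambda>\<sigma>. mdeg n (g \<sigma>)) ` U) \<in> (\<lambda>\<sigma>. mdeg n (g \<sigma>)) ` U" using U by (intro Max_in) auto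
  then obtain \<iota> where \<iota>_max: "Max ((\<lambda>\<sigma>. mdeg n (g \<sigma>)) ` U) = mdeg n (g \<iota>)" and "\<iota> \<in> U"
    by (rule imageE)
  then have \<iota>: "\<iota> \<in> ?C" "u \<iota> \<noteq> 0" by (auto simp: U_def)
  have max: "mdeg n (g \<sigma>) \<le> mdeg n (g \<iota>)" if "\<sigma> \<in> ?C" "u \<sigma> \<noteq> 0" for \<sigma>
    unfolding \<iota>_max[symmetric] using U that by (intro Max_ge) (auto simp: U_def)
  define E where "E = (\<lambda>\<gamma>. if \<gamma> = g \<iota> then 1 else 0 :: complex)"
  define e0 where "e0 \<tau> = (if \<tau> = (\<lambda>_. 0) then 1 else 0 :: complex)" for \<tau> :: mi
  have "det_on ?C (?A(\<iota> := e0)) = 0"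
  proof (rule det_on_replace_row_eq_0[where B = "\<lambda>\<sigma> \<tau>. pade E (g \<sigma>) \<tau>", OF fin \<iota> left])
    show "\<forall>\<tau>\<in>?C. (\<Sum>\<sigma>\<in>?C. u \<sigma> * pade E (g \<sigma>) \<tau>) = u \<iota> * e0 \<tau>"
    proof
      fix \<tau> assume "\<tau> \<in> ?C"
      from pade_unit_row_combination[where g = g and n = n and e = e and \<iota> = \<iota> and u = u and \<tau> = \<tau>,
          OF inj \<iota>(1) max this]
      show "(\<Sum>\<sigma>\<in>?C. u \<sigma> * pade E (g \<sigma>) \<tau>) = u \<iota> * e0 \<tau>" by (simp add: E_def e0_def)
    qed
    show "det_on ?C (\<lambda>\<sigma> \<tau>. ?A \<sigma> \<tau> + t * pade E (g \<sigma>) \<tau>) = 0" for t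
      using sing[of "\<lambda>\<gamma>. T \<gamma> + t * E \<gamma>"] by (simp only: pade_linear)
  qed
  then obtain w where w: "\<forall>\<tau>. \<tau> \<notin> ?C \<longrightarrow> w \<tau> = 0" "\<exists>\<tau>\<in>?C. w \<tau> \<noteq> 0"
    and Mw: "\<forall>\<sigma>\<in>?C. (\<Sum>\<tau>\<in>?C. (?A(\<iota> := e0)) \<sigma> \<tau> * w \<tau>) = 0"
    by (rule det_on_eq_0_imp_kernel[OF fin])
  have "(\<Sum>\<tau>\<in>?C. e0 \<tau> * w \<tau>) = (\<Sum>\<tau>\<in>?C. if \<tau> = (\<lambda>_. 0) then w \<tau> else 0)"
    by (rule sum.cong) (simp_all add: e0_def)
  also have "\<dots> = w (\<lambda>_. 0)" using fin zero_in_MI by simp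
  finally have w0: "w (\<lambda>_. 0) = 0" using Mw[rule_format, OF \<iota>(1)] by simp
  have rows: "\<forall>\<sigma>\<in>?C - {\<iota>}. (\<Sum>\<tau>\<in>?C. ?A \<sigma> \<tau> * w \<tau>) = 0"
  proof
    fix \<sigma> assume "\<sigma> \<in> ?C - {\<iota>}"
    then show "(\<Sum>\<tau>\<in>?C. ?A \<sigma> \<tau> * w \<tau>) = 0" using Mw[rule_format, of \<sigma>] by simp
  qed
  then have "(\<Sum>\<tau>\<in>?C. ?A \<iota> \<tau> * w \<tau>) = 0" by (rule left_kernel_row_eq_0[OF fin \<iota> left])
  with rows have "w \<in> pade_kernel n e g T" using w(1) by (auto simp: pade_kernel_def)
  then show ?thesis using w0 w(2) by (intro bexI[where x = w]) auto
qed

section \<open>Taylor coefficients of a quotient\<close>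

abbreviation MI_le :: "nat \<Rightarrow> nat \<Rightarrow> mi \<Rightarrow> mi set" where
  "MI_le n e \<gamma> \<equiv> {\<sigma>\<in>MI n e. \<forall>i. \<sigma> i \<le> \<gamma> i}"

text \<open>The coefficients of \<open>P / Q\<close> for \<open>Q(0) = 1\<close>, computed by the recursion
  \<open>c\<^sub>\<gamma> = p\<^sub>\<gamma> - \<Sum>\<^sub>0\<^sub><\<^sub>\<sigma>\<^sub>\<le>\<^sub>\<gamma> q\<^sub>\<sigma> c\<^sub>\<gamma>\<^sub>-\<^sub>\<sigma>\<close> unrolled \<open>k\<close> times; this is exact up to degree \<open>k\<close>.\<close>

primrec taylor_coeff :: "nat \<Rightarrow> nat \<Rightarrow> nat \<Rightarrow> (mi \<Rightarrow> complex) \<Rightarrow> (mi \<Rightarrow> complex) \<Rightarrow> mi \<Rightarrow> complex" where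
  "taylor_coeff n e 0 p q \<gamma> = p \<gamma>"
| "taylor_coeff n e (Suc k) p q \<gamma> =
     p \<gamma> - (\<Sum>\<sigma>\<in>MI_le n e \<gamma> - {\<lambda>_. 0}. q \<sigma> * taylor_coeff n e k p q (\<lambda>i. \<gamma> i - \<sigma> i))"

lemma finite_MI_le: "finite (MI_le n e \<gamma>)"
  using finite_MI by simp

lemma MI_le_zero: "MI_le n e (\<lambda>_. 0) = {\<lambda>_. 0}"
  using zero_in_MI by (auto simp: fun_eq_iff)

lemma MI_le_diff:
  assumes "\<gamma> \<in> MI n m" "\<sigma> \<in> MI_le n e \<gamma>" "\<sigma> \<noteq> (\<lambda>_. 0)"
  shows "(\<lambda>i. \<gamma> i - \<sigma> i) \<in> MI n m" "mdeg n (\<lambda>i. \<gamma> i - \<sigma> i) < mdeg n \<gamma>"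
proof -
  have "mdeg n \<gamma> = mdeg n (\<lambda>i. \<gamma> i - \<sigma> i) + mdeg n \<sigma>"
    using assms(2) by (simp add: mdeg_add[symmetric])
  moreover have "0 < mdeg n \<sigma>" using assms(2,3) mdeg_pos by blast
  ultimately show "(\<lambda>i. \<gamma> i - \<sigma> i) \<in> MI n m" "mdeg n (\<lambda>i. \<gamma> i - \<sigma> i) < mdeg n \<gamma>"
    using assms(1) by (auto simp: MI_def)
qed

lemma taylor_coeff_eq:
  assumes q0: "q (\<lambda>_. 0) = 1"
    and eq: "\<forall>\<gamma>\<in>MI n m. (\<Sum>\<sigma>\<in>MI_le n e \<gamma>. q \<sigma> * c (\<lambda>i. \<gamma> i - \<sigma> i)) = p \<gamma>"
  shows "\<gamma> \<in> MI n m \<Longrightarrow> mdeg n \<gamma> \<le> k \<Longrightarrow> c \<gamma> = taylor_coeff n e k p q \<gamma>"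
proof (induction k arbitrary: \<gamma>)
  have rec: "c \<gamma> = p \<gamma> - (\<Sum>\<sigma>\<in>MI_le n e \<gamma> - {\<lambda>_. 0}. q \<sigma> * c (\<lambda>i. \<gamma> i - \<sigma> i))"
    if "\<gamma> \<in> MI n m" for \<gamma>
  proof -
    have "p \<gamma> = (\<Sum>\<sigma>\<in>MI_le n e \<gamma>. q \<sigma> * c (\<lambda>i. \<gamma> i - \<sigma> i))" using eq that by simp
    also have "\<dots> = q (\<lambda>_. 0) * c (\<lambda>i. \<gamma> i - 0) +
                     (\<Sum>\<sigma>\<in>MI_le n e \<gamma> - {\<lambda>_. 0}. q \<sigma> * c (\<lambda>i. \<gamma> i - \<sigma> i))"
      by (rule sum.remove[OF finite_MI_le]) (simp add: zero_in_MI)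
    finally show ?thesis using q0 by simp
  qed
  {
    case 0
    have empty: "MI_le n e \<gamma> - {\<lambda>_. 0} = {}"
    proof (rule equals0I)
      fix \<sigma> assume "\<sigma> \<in> MI_le n e \<gamma> - {\<lambda>_. 0}"
      then have "mdeg n (\<lambda>i. \<gamma> i - \<sigma> i) < mdeg n \<gamma>" using MI_le_diff(2)[OF 0(1)] by blast
      then show False using 0(2) by simp
    qed
    show ?case using rec[OF 0(1)] by (simp only: empty sum.empty diff_zero taylor_coeff.simps)
  next
    case (Suc k)
    have "c (\<lambda>i. \<gamma> i - \<sigma> i) = taylor_coeff n e k p q (\<lambda>i. \<gamma> i - \<sigma> i)"
      if "\<sigma> \<in> MI_le n e \<gamma> - {\<lambda>_. 0}" for \<sigma>
    proof -
      have "(\<lambda>i. \<gamma> i - \<sigma> i) \<in> MI n m" "mdeg n (\<lambda>i. \<gamma> i - \<sigma> i) < mdeg n \<gamma>"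
        using MI_le_diff[OF Suc.prems(1)] that by auto
      then show ?thesis using Suc.IH Suc.prems(2) by simp
    qed
    then have "(\<Sum>\<sigma>\<in>MI_le n e \<gamma> - {\<lambda>_. 0}. q \<sigma> * c (\<lambda>i. \<gamma> i - \<sigma> i)) =
               (\<Sum>\<sigma>\<in>MI_le n e \<gamma> - {\<lambda>_. 0}. q \<sigma> * taylor_coeff n e k p q (\<lambda>i. \<gamma> i - \<sigma> i))"
      by (intro sum.cong) simp_all
    then show ?case using rec[OF Suc.prems(1)] by simp
  }
qed

lemma poly_deg_le_taylor_coeff:
  assumes P: "\<And>\<gamma>. poly_deg_le J 1 (\<lambda>x. P x \<gamma>)" and Q: "\<And>\<sigma>. poly_deg_le J 1 (\<lambda>x. Q x \<sigma>)"
  shows "poly_deg_le J (Suc k) (\<lambda>x. taylor_coeff n e k (P x) (Q x) \<gamma>)"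
proof (induction k arbitrary: \<gamma>)
  case 0
  then show ?case using P by simp
next
  case (Suc k)
  have "poly_deg_le J (Suc (Suc k)) (\<lambda>x. P x \<gamma>)" using poly_deg_le_mono[OF P] by simp
  moreover have "poly_deg_le J (Suc (Suc k))
      (\<lambda>x. \<Sum>\<sigma>\<in>MI_le n e \<gamma> - {\<lambda>_. 0}. Q x \<sigma> * taylor_coeff n e k (P x) (Q x) (\<lambda>i. \<gamma> i - \<sigma> i))"
    using finite_MI_le by (intro poly_deg_le_sum poly_deg_le.mult[OF Q Suc.IH]) auto
  ultimately show ?case by (simp add: poly_deg_le_diff)
qed

lemma pade_kernel_eq_0:
  assumes order: "bij_betw g (MI n e) (MIrange n (d + 1) m)" and w: "w \<in> pade_kernel n e g t"
    and \<gamma>: "\<gamma> \<in> MI n m" "\<gamma> \<notin> MI n d"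
  shows "(\<Sum>\<sigma>\<in>MI_le n e \<gamma>. w \<sigma> * t (\<lambda>i. \<gamma> i - \<sigma> i)) = 0"
proof -
  have "\<gamma> \<in> MIrange n (d + 1) m" using \<gamma> by (auto simp: MI_def MIrange_def)
  then obtain \<rho> where \<rho>: "\<rho> \<in> MI n e" "\<gamma> = g \<rho>" using order unfolding bij_betw_def by blast
  have "(\<Sum>\<sigma>\<in>MI_le n e \<gamma>. w \<sigma> * t (\<lambda>i. \<gamma> i - \<sigma> i)) =
        (\<Sum>\<sigma>\<in>MI n e. if \<forall>i. \<sigma> i \<le> \<gamma> i then w \<sigma> * t (\<lambda>i. \<gamma> i - \<sigma> i) else 0)"
    by (rule sum.inter_filter[OF finite_MI])
  also have "\<dots> = (\<Sum>\<sigma>\<in>MI n e. pade t (g \<rho>) \<sigma> * w \<sigma>)"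
    by (rule sum.cong) (auto simp: pade_def \<rho>(2))
  also have "\<dots> = 0" using w \<rho>(1) by (simp add: pade_kernel_def)
  finally show ?thesis .
qed

text \<open>Subtracting a suitable multiple of a kernel vector \<open>w\<close> with \<open>w(0) = 0\<close> and \<open>w(s) \<noteq> 0\<close> from the
  denominator of a representation of \<open>t\<close> kills its coefficient at \<open>s\<close> without changing \<open>Q(0) = 1\<close>, the
  degree bounds, or the Taylor coefficients up to degree \<open>m\<close>.\<close>

lemma taylor_image_normalized_denominator:
  assumes order: "bij_betw g (MI n e) (MIrange n (d + 1) m)" and t: "t \<in> taylor_image n d e m"
    and w: "w \<in> pade_kernel n e g t" "w (\<lambda>_. 0) = 0" and s: "w s \<noteq> 0"
  shows "\<exists>p q. p (\<lambda>_. 0) = 1 \<and> q (\<lambda>_. 0) = 1 \<and> q s = 0 \<and>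
    (\<forall>\<gamma>. \<gamma> \<notin> MI n d \<longrightarrow> p \<gamma> = 0) \<and> (\<forall>\<sigma>. \<sigma> \<notin> MI n e \<longrightarrow> q \<sigma> = 0) \<and>
    (\<forall>\<gamma>\<in>MI n m. t \<gamma> = taylor_coeff n e m p q \<gamma>)"
proof -
  from t obtain p0 q0 where pq: "p0 (\<lambda>_. 0) = 1" "q0 (\<lambda>_. 0) = 1"
      "\<forall>\<gamma>. \<gamma> \<notin> MI n d \<longrightarrow> p0 \<gamma> = 0" "\<forall>\<sigma>. \<sigma> \<notin> MI n e \<longrightarrow> q0 \<sigma> = 0"
    and eq0: "\<forall>\<gamma>\<in>MI n m. (\<Sum>\<sigma>\<in>MI_le n e \<gamma>. q0 \<sigma> * t (\<lambda>i. \<gamma> i - \<sigma> i)) = p0 \<gamma>"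
    unfolding taylor_image_def by blast
  define q where "q \<sigma> = q0 \<sigma> - q0 s / w s * w \<sigma>" for \<sigma>
  define p where "p \<gamma> = (if \<gamma> \<in> MI n d then (\<Sum>\<sigma>\<in>MI_le n e \<gamma>. q \<sigma> * t (\<lambda>i. \<gamma> i - \<sigma> i)) else 0)" for \<gamma>
  have q: "q (\<lambda>_. 0) = 1" "q s = 0" "\<forall>\<sigma>. \<sigma> \<notin> MI n e \<longrightarrow> q \<sigma> = 0"
    using pq(2,4) w s by (auto simp: q_def pade_kernel_def)
  have eq: "\<forall>\<gamma>\<in>MI n m. (\<Sum>\<sigma>\<in>MI_le n e \<gamma>. q \<sigma> * t (\<lambda>i. \<gamma> i - \<sigma> i)) = p \<gamma>"
  proof
    fix \<gamma> assume \<gamma>: "\<gamma> \<in> MI n m"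
    show "(\<Sum>\<sigma>\<in>MI_le n e \<gamma>. q \<sigma> * t (\<lambda>i. \<gamma> i - \<sigma> i)) = p \<gamma>"
    proof (cases "\<gamma> \<in> MI n d")
      case False
      have "(\<Sum>\<sigma>\<in>MI_le n e \<gamma>. q \<sigma> * t (\<lambda>i. \<gamma> i - \<sigma> i)) =
            (\<Sum>\<sigma>\<in>MI_le n e \<gamma>. q0 \<sigma> * t (\<lambda>i. \<gamma> i - \<sigma> i)) -
              q0 s / w s * (\<Sum>\<sigma>\<in>MI_le n e \<gamma>. w \<sigma> * t (\<lambda>i. \<gamma> i - \<sigma> i))"
        by (simp add: q_def left_diff_distrib sum_subtractf sum_distrib_left mult.assoc)
      also have "\<dots> = 0"
        using eq0 \<gamma> pq(3) False pade_kernel_eq_0[OF order w(1) \<gamma> False] by simp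
      finally show ?thesis using False by (simp add: p_def)
    qed (simp add: p_def)
  qed
  have "t (\<lambda>_. 0) = 1"
    using eq0[rule_format, OF zero_in_MI] pq(1,2) unfolding MI_le_zero by simp
  then have "p (\<lambda>_. 0) = 1" using q(1) zero_in_MI unfolding p_def MI_le_zero by simp
  moreover have "\<forall>\<gamma>. \<gamma> \<notin> MI n d \<longrightarrow> p \<gamma> = 0" by (simp add: p_def)
  moreover have "\<forall>\<gamma>\<in>MI n m. t \<gamma> = taylor_coeff n e m p q \<gamma>"
    using taylor_coeff_eq[OF q(1) eq] by (simp add: MI_def)
  ultimately show ?thesis using q by (intro exI[of _ p] exI[of _ q]) simp
qed

text \<open>Parameters: \<open>None\<close> is the scaling factor of the affine cone, \<open>Some (Inl \<gamma>)\<close> the coefficient of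
  \<open>x\<^sup>\<gamma>\<close> in \<open>P\<close> and \<open>Some (Inr \<sigma>)\<close> that in \<open>Q\<close>; the constant terms are \<open>1\<close> and the coefficient of \<open>Q\<close>
  at \<open>s\<close> is \<open>0\<close>.\<close>

definition param_num :: "nat \<Rightarrow> nat \<Rightarrow> ((mi + mi) option \<Rightarrow> complex) \<Rightarrow> mi \<Rightarrow> complex" where
  "param_num n d x \<gamma> =
     (if \<gamma> = (\<lambda>_. 0) then 1 else if \<gamma> \<in> MI n d then x (Some (Inl \<gamma>)) else 0)"

definition param_den :: "nat \<Rightarrow> nat \<Rightarrow> mi \<Rightarrow> ((mi + mi) option \<Rightarrow> complex) \<Rightarrow> mi \<Rightarrow> complex" where
  "param_den n e s x \<sigma> =
     (if \<sigma> = (\<lambda>_. 0) then 1 else if \<sigma> \<in> MI n e \<and> \<sigma> \<noteq> s then x (Some (Inr \<sigma>)) else 0)"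

definition params :: "nat \<Rightarrow> nat \<Rightarrow> nat \<Rightarrow> mi \<Rightarrow> (mi + mi) option set" where
  "params n d e s =
     insert None ((Some \<circ> Inl) ` (MI n d - {\<lambda>_. 0}) \<union> (Some \<circ> Inr) ` (MI n e - {\<lambda>_. 0, s}))"

definition taylor_param :: "nat \<Rightarrow> nat \<Rightarrow> nat \<Rightarrow> nat \<Rightarrow> mi \<Rightarrow> ((mi + mi) option \<Rightarrow> complex) \<Rightarrow> mi \<Rightarrow> complex" where
  "taylor_param n d e m s x \<gamma> =
     (if \<gamma> \<in> MI n m then x None * taylor_coeff n e m (param_num n d x) (param_den n e s x) \<gamma> else 0)"

lemma taylor_param_in_amb: "taylor_param n d e m s x \<in> amb (MI n m)"
  by (simp add: amb_def taylor_param_def)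

lemma card_params:
  assumes "s \<in> MI n e" "s \<noteq> (\<lambda>_. 0)"
  shows "finite (params n d e s) \<and> card (params n d e s) \<le> (d + n choose n) + (e + n choose n) - 2"
proof -
  have "card ((Some \<circ> Inl) ` (MI n d - {\<lambda>_. 0}) :: (mi + mi) option set) \<le> (d + n choose n) - 1"
    using card_image_le[of "MI n d - {\<lambda>_. 0}" "Some \<circ> Inl"] finite_MI zero_in_MI
    by (simp add: card_MI)
  moreover have "card ((Some \<circ> Inr) ` (MI n e - {\<lambda>_. 0, s}) :: (mi + mi) option set) \<le> (e + n choose n) - 2"
    using card_image_le[of "MI n e - {\<lambda>_. 0, s}" "Some \<circ> Inr"] finite_MI zero_in_MI assms
    by (simp add: card_MI card_Diff_subset numeral_2_eq_2)
  moreover have "2 \<le> (e + n choose n)"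
    using card_mono[OF finite_MI, of "{\<lambda>_. 0, s}" n e] zero_in_MI assms by (simp add: card_MI)
  moreover have "0 < (d + n choose n)" by simp
  moreover have "card (params n d e s) \<le> Suc (card ((Some \<circ> Inl) ` (MI n d - {\<lambda>_. 0}) \<union>
      ((Some \<circ> Inr) ` (MI n e - {\<lambda>_. 0, s}) :: (mi + mi) option set)))"
    unfolding params_def by (rule card_insert_le_m1) simp_all
  moreover note card_Un_le[of "(Some \<circ> Inl) ` (MI n d - {\<lambda>_. 0})" "(Some \<circ> Inr) ` (MI n e - {\<lambda>_. 0, s})"]
  moreover have "finite (params n d e s)" unfolding params_def using finite_MI by simp
  ultimately show ?thesis by linarith
qed

lemma poly_deg_le_taylor_param: "poly_deg_le (params n d e s) (m + 2) (\<lambda>x. taylor_param n d e m s x \<gamma>)"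
proof -
  have num: "poly_deg_le (params n d e s) 1 (\<lambda>x. param_num n d x \<gamma>)" for \<gamma>
  proof (cases "\<gamma> \<noteq> (\<lambda>_. 0) \<and> \<gamma> \<in> MI n d")
    case True
    then have "Some (Inl \<gamma>) \<in> params n d e s" by (simp add: params_def)
    then show ?thesis using True by (simp add: param_num_def poly_deg_le.var)
  qed (cases "\<gamma> = (\<lambda>_. 0)"; auto simp: param_num_def intro: poly_deg_le.const)
  have den: "poly_deg_le (params n d e s) 1 (\<lambda>x. param_den n e s x \<sigma>)" for \<sigma>
  proof (cases "\<sigma> \<noteq> (\<lambda>_. 0) \<and> \<sigma> \<in> MI n e \<and> \<sigma> \<noteq> s")
    case True
    then have "Some (Inr \<sigma>) \<in> params n d e s" by (simp add: params_def)
    then show ?thesis using True by (simp add: param_den_def poly_deg_le.var)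
  qed (cases "\<sigma> = (\<lambda>_. 0)"; auto simp: param_den_def intro: poly_deg_le.const)
  have "poly_deg_le (params n d e s) (1 + Suc m)
      (\<lambda>x. x None * taylor_coeff n e m (param_num n d x) (param_den n e s x) \<gamma>)"
  proof (rule poly_deg_le.mult[of _ 1 _ "Suc m"])
    show "poly_deg_le (params n d e s) 1 (\<lambda>x. x None)"
      by (rule poly_deg_le.var) (simp_all add: params_def)
    show "poly_deg_le (params n d e s) (Suc m)
        (\<lambda>x. taylor_coeff n e m (param_num n d x) (param_den n e s x) \<gamma>)"
      by (rule poly_deg_le_taylor_coeff[OF num den])
  qed simp
  then show ?thesis by (cases "\<gamma> \<in> MI n m") (simp_all add: taylor_param_def poly_deg_le.const)
qed

lemma taylor_cone_subset_taylor_params: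
  assumes order: "bij_betw g (MI n e) (MIrange n (d + 1) m)"
    and ker: "\<And>T. \<exists>w\<in>pade_kernel n e g T. w (\<lambda>_. 0) = 0 \<and> (\<exists>\<sigma>\<in>MI n e. w \<sigma> \<noteq> 0)"
  shows "taylor_cone n d e m \<subseteq> (\<Union>s\<in>MI n e - {\<lambda>_. 0}. range (taylor_param n d e m s))"
proof
  fix c assume "c \<in> taylor_cone n d e m"
  then obtain t a where t: "t \<in> taylor_image n d e m" and c: "c = (\<lambda>\<gamma>. a * t \<gamma>)"
    unfolding taylor_cone_def by blast
  obtain w s where w: "w \<in> pade_kernel n e g t" "w (\<lambda>_. 0) = 0" and s: "s \<in> MI n e" "w s \<noteq> 0"
    using ker[of t] by blast
  obtain p q where pq: "p (\<lambda>_. 0) = 1" "q (\<lambda>_. 0) = 1" "q s = 0"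
    "\<forall>\<gamma>. \<gamma> \<notin> MI n d \<longrightarrow> p \<gamma> = 0" "\<forall>\<sigma>. \<sigma> \<notin> MI n e \<longrightarrow> q \<sigma> = 0"
    and t_eq: "\<forall>\<gamma>\<in>MI n m. t \<gamma> = taylor_coeff n e m p q \<gamma>"
    using taylor_image_normalized_denominator[where t = t and w = w and s = s, OF order t w s(2)] by blast
  define x where "x = case_option a (case_sum p q)"
  have "param_num n d x = p"
  proof
    fix \<gamma> show "param_num n d x \<gamma> = p \<gamma>"
      using pq(1,4) by (cases "\<gamma> = (\<lambda>_. 0)") (auto simp: param_num_def x_def)
  qed
  moreover have "param_den n e s x = q"
  proof
    fix \<sigma> show "param_den n e s x \<sigma> = q \<sigma>"
      using pq(2,3,5) by (cases "\<sigma> = (\<lambda>_. 0)") (auto simp: param_den_def x_def)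
  qed
  moreover have "t \<gamma> = 0" if "\<gamma> \<notin> MI n m" for \<gamma>
    using t that unfolding taylor_image_def by blast
  moreover have "x None = a" by (simp add: x_def)
  ultimately have "c = taylor_param n d e m s x"
    using t_eq by (auto simp: c taylor_param_def)
  moreover have "s \<noteq> (\<lambda>_. 0)" using s(2) w(2) by auto
  ultimately show "c \<in> (\<Union>s\<in>MI n e - {\<lambda>_. 0}. range (taylor_param n d e m s))"
    using s(1) by blast
qed

lemma zdim_taylor_cone_le:
  assumes order: "bij_betw g (MI n e) (MIrange n (d + 1) m)"
    and ker: "\<And>T. \<exists>w\<in>pade_kernel n e g T. w (\<lambda>_. 0) = 0 \<and> (\<exists>\<sigma>\<in>MI n e. w \<sigma> \<noteq> 0)"
  shows "zdim (MI n m) (zclosure (MI n m) (taylor_cone n d e m))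
           \<le> enat ((d + n choose n) + (e + n choose n) - 2)"
proof (rule zdim_zclosure_le)
  show "finite (MI n e - {\<lambda>_. 0})" using finite_MI by simp
  show "finite (params n d e s) \<and> card (params n d e s) \<le> (d + n choose n) + (e + n choose n) - 2"
    if "s \<in> MI n e - {\<lambda>_. 0}" for s
    using card_params that by blast
  show "taylor_param n d e m s x \<in> amb (MI n m)" for s x by (rule taylor_param_in_amb)
  show "poly_deg_le (params n d e s) (m + 2) (\<lambda>x. taylor_param n d e m s x \<gamma>)" for s \<gamma>
    by (rule poly_deg_le_taylor_param)
  show "taylor_cone n d e m \<subseteq> (\<Union>s\<in>MI n e - {\<lambda>_. 0}. range (taylor_param n d e m s))"
    by (rule taylor_cone_subset_taylor_params[OF order ker])
qed

text \<open>Under \<open>square\<close> the expected dimension is \<open>bigN n m - 1\<close>, so \<open>nondefective\<close> says the same as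
  \<open>hypersurface\<close>; only the latter is used.\<close>

theorem proposition4p1:
  fixes n d e m :: nat and g :: "mi \<Rightarrow> mi"
  assumes square: "(m + n choose n) - (d + n choose n) = (e + n choose n)"
    and nondefective: "taylor_dim n d e m = enat (expected_dim n d e m)"
    and hypersurface: "taylor_dim n d e m = enat (bigN n m - 1)"
    and order: "bij_betw g (MI n e) (MIrange n (d + 1) m)"
  shows "\<exists>c :: mi \<Rightarrow> complex. det_on (MI n e) (\<lambda>\<sigma> \<tau>. pade c (g \<sigma>) \<tau>) \<noteq> 0"
proof (rule ccontr)
  assume "\<not> ?thesis"
  then have ker: "\<exists>w\<in>pade_kernel n e g T. w (\<lambda>_. 0) = 0 \<and> (\<exists>\<sigma>\<in>MI n e. w \<sigma> \<noteq> 0)" for T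
    using pade_kernel_vanishing_at_0[OF bij_betw_imp_inj_on[OF order]] by blast
  then obtain s where "s \<in> MI n e" "s \<noteq> (\<lambda>_. 0)" by fastforce
  then have "2 \<le> (e + n choose n)"
    using card_mono[OF finite_MI, of "{\<lambda>_. 0, s}"] zero_in_MI by (fastforce simp: card_MI)
  moreover have "0 < (d + n choose n)" by simp
  ultimately have N: "bigN n m - 1 = (d + n choose n) + (e + n choose n) - 2"
    "1 \<le> (d + n choose n) + (e + n choose n) - 2"
    using square unfolding bigN_def by linarith+
  have "zdim (MI n m) (zclosure (MI n m) (taylor_cone n d e m)) - 1
          = enat ((d + n choose n) + (e + n choose n) - 2)"
    using hypersurface N(1) by (simp add: taylor_dim_def)
  moreover note zdim_taylor_cone_le[OF order ker]
  ultimately show False using N(2)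
    by (cases "zdim (MI n m) (zclosure (MI n m) (taylor_cone n d e m))") (auto simp: one_enat_def)
qed

end
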